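(* Let $x_0>0$, $L>0$, and let $\gamma$ be an admissible curve parametrized by arc length. Let $\mathcal V$ be a first-order area-preserving admissible variation of $\gamma$ with velocity $X$ and acceleration $X'$. Then there exists an area-preserving admissible variation $\tilde{\mathcal V}$ of $\gamma$, with velocity $\tilde X$ and acceleration $\tilde X'$, such that $\tilde X=X$ on $[0,2L]$ and $\tilde X'=X'$ on $[0,\frac L2]\cup[\frac{3L}2,2L]$.
   Context: Notation: $(\xi,\eta)^\perp=(\eta,-\xi)$; for a regular curve $\gamma\in C^2([0,2L],\mathbb R^2)$ ($|\dot\gamma|>0$), curvature $H=\langle\dot\gamma,\ddot\gamma^\perp\rangle/|\dot\gamma|^3$, normal $N=\dot\gamma^\perp/|\dot\gamma|$; strictly counterclockwise means $H>0$. A curve $\gamma=(x,y)$ is admissible if $\gamma\in C^\infty([0,2L],\mathbb R^2)$ is regular, strictly counterclockwise, injective, $\gamma(0)=(x_0,0)$, $\gamma(2L)=(-x_0,0)$, $y>0$ on $(0,2L)$. Enclosed area: $\mathcal A(\gamma)=\frac12\int_0^{2L}(x\dot y-\dot x y)\,ds$. An admissible variation is a smooth $\mathcal V:[0,2L]\times[-t_{\mathcal V},t_{\mathcal V}]\to\mathbb R^2$ with $\mathcal V(\cdot,0)=\gamma$ and $\gamma_t=\mathcal V(\cdot,t)$ admissible for all $t$; velocity $X=\partial_t\mathcal V|_{t=0}$, acceleration $X'=\partial_t^2\mathcal V|_{t=0}$. It is area-preserving if $\mathcal A(\gamma_t)=\mathcal A(\gamma)$ for all $t$, and first-order area-preserving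 if $\int_0^{2L}\langle X,N\rangle\,ds=0$ (for arc-length parametrized $\gamma$). *)

theory Defs
  imports "HOL-Analysis.Analysis"
begin

fun Ck_on :: "nat \<Rightarrow> 'a::euclidean_space set \<Rightarrow> ('a \<Rightarrow> 'b::real_normed_vector) \<Rightarrow> bool" where
  "Ck_on 0 U f = continuous_on U f"
| "Ck_on (Suc n) U f =
     (f differentiable_on U \<and> continuous_on U f \<and>
      (\<forall>i\<in>Basis. Ck_on n U (\<lambda>x. frechet_derivative f (at x) i)))"

definition Cinf_on :: "'a::euclidean_space set \<Rightarrow> ('a \<Rightarrow> 'b::real_normed_vector) \<Rightarrow> bool" where
  "Cinf_on U f \<longleftrightarrow> open U \<and> (\<forall>n. Ck_on n U f)"

definition smooth_on_set :: "'a::euclidean_space set \<Rightarrow> ('a \<Rightarrow> 'b::real_normed_vector) \<Rightarrow> bool" where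
  "smooth_on_set S f \<longleftrightarrow> (\<exists>U g. open U \<and> S \<subseteq> U \<and> Cinf_on U g \<and> (\<forall>x\<in>S. g x = f x))"

definition perp :: "real \<times> real \<Rightarrow> real \<times> real" where
  "perp v = (snd v, - fst v)"

definition d1 :: "real \<Rightarrow> (real \<Rightarrow> real \<times> real) \<Rightarrow> real \<Rightarrow> real \<times> real" where
  "d1 L \<gamma> s = vector_derivative \<gamma> (at s within {0..2*L})"

definition d2 :: "real \<Rightarrow> (real \<Rightarrow> real \<times> real) \<Rightarrow> real \<Rightarrow> real \<times> real" where
  "d2 L \<gamma> s = vector_derivative (d1 L \<gamma>) (at s within {0..2*L})"

definition curvature :: "real \<Rightarrow> (real \<Rightarrow> real \<times> real) \<Rightarrow> real \<Rightarrow> real" where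
  "curvature L \<gamma> s = inner (d1 L \<gamma> s) (perp (d2 L \<gamma> s)) / norm (d1 L \<gamma> s) ^ 3"

definition normal :: "real \<Rightarrow> (real \<Rightarrow> real \<times> real) \<Rightarrow> real \<Rightarrow> real \<times> real" where
  "normal L \<gamma> s = inverse (norm (d1 L \<gamma> s)) *\<^sub>R perp (d1 L \<gamma> s)"

definition admissible :: "real \<Rightarrow> real \<Rightarrow> (real \<Rightarrow> real \<times> real) \<Rightarrow> bool" where
  "admissible L x0 \<gamma> \<longleftrightarrow>
     smooth_on_set {0..2*L} \<gamma> \<and>
     (\<forall>s\<in>{0..2*L}. d1 L \<gamma> s \<noteq> 0) \<and>
     (\<forall>s\<in>{0..2*L}. curvature L \<gamma> s > 0) \<and>
     inj_on \<gamma> {0..2*L} \<and>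
     \<gamma> 0 = (x0, 0) \<and> \<gamma> (2*L) = (-x0, 0) \<and>
     (\<forall>s\<in>{0<..<2*L}. snd (\<gamma> s) > 0)"

definition arclength_param :: "real \<Rightarrow> (real \<Rightarrow> real \<times> real) \<Rightarrow> bool" where
  "arclength_param L \<gamma> \<longleftrightarrow> (\<forall>s\<in>{0..2*L}. norm (d1 L \<gamma> s) = 1)"

definition area :: "real \<Rightarrow> (real \<Rightarrow> real \<times> real) \<Rightarrow> real" where
  "area L \<gamma> = (1/2) * integral {0..2*L}
     (\<lambda>s. fst (\<gamma> s) * snd (d1 L \<gamma> s) - fst (d1 L \<gamma> s) * snd (\<gamma> s))"

definition admissible_variation ::
  "real \<Rightarrow> real \<Rightarrow> (real \<Rightarrow> real \<times> real) \<Rightarrow> (real \<times> real \<Rightarrow> real \<times> real) \<Rightarrow> real \<Rightarrow> bool" where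
  "admissible_variation L x0 \<gamma> V tV \<longleftrightarrow>
     tV > 0 \<and>
     smooth_on_set ({0..2*L} \<times> {-tV..tV}) V \<and>
     (\<forall>s\<in>{0..2*L}. V (s, 0) = \<gamma> s) \<and>
     (\<forall>t\<in>{-tV..tV}. admissible L x0 (\<lambda>s. V (s, t)))"

definition velocity :: "(real \<times> real \<Rightarrow> real \<times> real) \<Rightarrow> real \<Rightarrow> real \<Rightarrow> real \<times> real" where
  "velocity V tV s = vector_derivative (\<lambda>t. V (s, t)) (at 0 within {-tV..tV})"

definition acceleration :: "(real \<times> real \<Rightarrow> real \<times> real) \<Rightarrow> real \<Rightarrow> real \<Rightarrow> real \<times> real" where
  "acceleration V tV s =
     vector_derivative (\<lambda>t. vector_derivative (\<lambda>\<tau>. V (s, \<tau>)) (at t within {-tV..tV}))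
       (at 0 within {-tV..tV})"

definition area_preserving :: "real \<Rightarrow> (real \<Rightarrow> real \<times> real) \<Rightarrow> (real \<times> real \<Rightarrow> real \<times> real) \<Rightarrow> real \<Rightarrow> bool" where
  "area_preserving L \<gamma> V tV \<longleftrightarrow> (\<forall>t\<in>{-tV..tV}. area L (\<lambda>s. V (s, t)) = area L \<gamma>)"

definition first_order_area_preserving ::
  "real \<Rightarrow> (real \<Rightarrow> real \<times> real) \<Rightarrow> (real \<times> real \<Rightarrow> real \<times> real) \<Rightarrow> real \<Rightarrow> bool" where
  "first_order_area_preserving L \<gamma> V tV \<longleftrightarrow>
     integral {0..2*L} (\<lambda>s. inner (velocity V tV s) (normal L \<gamma> s)) = 0"

end

(*
  Correct only the horizontal component of the variation: with a smooth bump function beta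
  supported in (L/2, 3L/2) and eta = beta y', where y' is the vertical component of the unit
  tangent of gamma, put W(s,t) = V(s,t) + (h(t) eta(s), 0). This keeps the end points and the
  heights of all curves, and for small t also regularity, positive curvature and injectivity.
  Integrating by parts, area W_t = A(t) + h(t) B(t), where A(t) is the area of V_t and
  B(t) = integral of eta y'_t; B(0) = integral of beta y'^2 is positive, because positive
  curvature forbids y' = 0 on all of (L/2, 3L/2). The choice h = (A(0) - A) / B makes W area
  preserving. The first variation formula A'(0) = integral of <X, N> = 0 gives h(0) = h'(0) = 0,
  so W has the velocity of V, and its acceleration differs from that of V by h''(0) eta, which
  vanishes outside (L/2, 3L/2). All derivatives are taken of a smooth extension of V to an open
  neighbourhood of the parameter rectangle.
*)

theory Submission
  imports Defs
begin

section \<open>Finitely differentiable maps\<close>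

lemma Ck_on_continuous_on: "Ck_on n U f \<Longrightarrow> continuous_on U f"
  by (cases n) auto

lemma Ck_on_Suc_imp: "Ck_on (Suc n) U f \<Longrightarrow> Ck_on n U f"
proof (induction n arbitrary: f)
  case 0
  then show ?case by auto
next
  case (Suc n)
  then show ?case by (metis Ck_on.simps(2))
qed

lemma Ck_on_frechet_derivative:
  "Ck_on (Suc n) U f \<Longrightarrow> i \<in> Basis \<Longrightarrow> Ck_on n U (\<lambda>x. frechet_derivative f (at x) i)"
  by simp

lemma Ck_on_has_derivative:
  assumes "open U" "Ck_on (Suc n) U f" "x \<in> U"
  shows "(f has_derivative frechet_derivative f (at x)) (at x)"
proof -
  have "f differentiable_on U" using assms(2) by simp
  then have "f differentiable at x" using assms(1,3) differentiable_on_eq_differentiable_at by blast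
  then show ?thesis using frechet_derivative_works by blast
qed

lemma Ck_on_subset: "Ck_on n U f \<Longrightarrow> V \<subseteq> U \<Longrightarrow> Ck_on n V f"
  by (induction n arbitrary: f) (auto intro: continuous_on_subset differentiable_on_subset)

lemma Ck_on_cong:
  assumes "open U" "\<And>x. x \<in> U \<Longrightarrow> f x = g x" "Ck_on n U f"
  shows "Ck_on n U g"
  using assms(2,3)
proof (induction n arbitrary: f g)
  case 0
  then show ?case using continuous_on_cong by force
next
  case (Suc n)
  have derivative_eq: "frechet_derivative f (at x) = frechet_derivative g (at x)" if "x \<in> U" for x
  proof (rule frechet_derivative_transform_within_open[OF _ \<open>open U\<close> that])
    show "f differentiable at x"
      using Ck_on_has_derivative[OF assms(1) Suc.prems(2) that] differentiableI by blast
  qed (rule Suc.prems(1))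
  have "(g has_derivative frechet_derivative f (at x)) (at x)" if "x \<in> U" for x
    by (rule has_derivative_transform_within_open[OF Ck_on_has_derivative[OF assms(1) Suc.prems(2) that]
          \<open>open U\<close> that]) (simp add: Suc.prems(1))
  then have "g differentiable_on U"
    by (meson differentiableI differentiable_at_withinI differentiable_on_def)
  moreover have "continuous_on U g"
    using Suc.prems continuous_on_cong by auto
  moreover have "Ck_on n U (\<lambda>x. frechet_derivative g (at x) i)" if "i \<in> Basis" for i
    using Suc.IH[of "\<lambda>x. frechet_derivative f (at x) i"] Suc.prems(2) that derivative_eq by simp
  ultimately show ?case by simp
qed

lemma Ck_on_SucI:
  assumes "open U" "\<And>x. x \<in> U \<Longrightarrow> (f has_derivative F x) (at x)"
    "\<And>i. i \<in> Basis \<Longrightarrow> Ck_on n U (\<lambda>x. F x i)"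
  shows "Ck_on (Suc n) U f"
proof -
  have "f differentiable_on U"
    using assms(2) by (meson differentiableI differentiable_at_withinI differentiable_on_def)
  moreover have "continuous_on U f"
    using assms(2) by (meson continuous_at_imp_continuous_on has_derivative_continuous)
  moreover have "Ck_on n U (\<lambda>x. frechet_derivative f (at x) i)" if "i \<in> Basis" for i
    using assms(2) frechet_derivative_at
    by (intro Ck_on_cong[OF \<open>open U\<close> _ assms(3)[OF that]]) fastforce
  ultimately show ?thesis by simp
qed

lemma Ck_on_const: "Ck_on n U (\<lambda>x. c)"
  by (induction n arbitrary: c) simp_all

lemma Ck_on_add:
  "open U \<Longrightarrow> Ck_on n U f \<Longrightarrow> Ck_on n U g \<Longrightarrow> Ck_on n U (\<lambda>x. f x + g x)"
proof (induction n arbitrary: f g)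
  case 0
  then show ?case by (auto intro: continuous_on_add)
next
  case (Suc n)
  show ?case
  proof (rule Ck_on_SucI[OF \<open>open U\<close>])
    fix x assume "x \<in> U"
    show "((\<lambda>x. f x + g x) has_derivative
        (\<lambda>h. frechet_derivative f (at x) h + frechet_derivative g (at x) h)) (at x)"
      using Ck_on_has_derivative[OF Suc.prems(1,2) \<open>x \<in> U\<close>]
        Ck_on_has_derivative[OF Suc.prems(1,3) \<open>x \<in> U\<close>] by (rule has_derivative_add)
  next
    fix i :: 'a assume "i \<in> Basis"
    then show "Ck_on n U (\<lambda>x. frechet_derivative f (at x) i + frechet_derivative g (at x) i)"
      using Suc.IH[OF Suc.prems(1) Ck_on_frechet_derivative[OF Suc.prems(2)]
          Ck_on_frechet_derivative[OF Suc.prems(3)]] by blast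
  qed
qed

lemma Ck_on_bounded_linear:
  "open U \<Longrightarrow> bounded_linear l \<Longrightarrow> Ck_on n U f \<Longrightarrow> Ck_on n U (\<lambda>x. l (f x))"
proof (induction n arbitrary: f)
  case 0
  then show ?case by (auto intro: bounded_linear.continuous_on)
next
  case (Suc n)
  show ?case
  proof (rule Ck_on_SucI[OF \<open>open U\<close>])
    fix x assume "x \<in> U"
    show "((\<lambda>x. l (f x)) has_derivative (\<lambda>h. l (frechet_derivative f (at x) h))) (at x)"
      using Ck_on_has_derivative[OF Suc.prems(1,3) \<open>x \<in> U\<close>] Suc.prems(2)
      by (rule bounded_linear.has_derivative[rotated])
  next
    fix i :: 'a assume "i \<in> Basis"
    then show "Ck_on n U (\<lambda>x. l (frechet_derivative f (at x) i))"
      using Suc.IH[OF Suc.prems(1,2) Ck_on_frechet_derivative[OF Suc.prems(3)]] by blast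
  qed
qed

lemma Ck_on_bounded_bilinear:
  fixes prod :: "'b::real_normed_vector \<Rightarrow> 'c::real_normed_vector \<Rightarrow> 'd::real_normed_vector"
    and U :: "'a::euclidean_space set"
  shows "open U \<Longrightarrow> bounded_bilinear prod \<Longrightarrow> Ck_on n U f \<Longrightarrow> Ck_on n U g \<Longrightarrow>
    Ck_on n U (\<lambda>x. prod (f x) (g x))"
proof (induction n arbitrary: f g)
  case 0
  then show ?case by (auto intro: bounded_bilinear.continuous_on)
next
  case (Suc n)
  note f = Suc.prems(3) and g = Suc.prems(4)
  show ?case
  proof (rule Ck_on_SucI[OF \<open>open U\<close>])
    fix x assume "x \<in> U"
    show "((\<lambda>x. prod (f x) (g x)) has_derivative
        (\<lambda>h. prod (f x) (frechet_derivative g (at x) h) + prod (frechet_derivative f (at x) h) (g x))) (at x)"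
      by (rule bounded_bilinear.FDERIV[OF Suc.prems(2) Ck_on_has_derivative[OF Suc.prems(1) f \<open>x \<in> U\<close>]
            Ck_on_has_derivative[OF Suc.prems(1) g \<open>x \<in> U\<close>]])
  next
    fix i :: 'a assume "i \<in> Basis"
    then show "Ck_on n U (\<lambda>x. prod (f x) (frechet_derivative g (at x) i) +
        prod (frechet_derivative f (at x) i) (g x))"
      using Suc.IH[OF Suc.prems(1,2) Ck_on_Suc_imp[OF f] Ck_on_frechet_derivative[OF g]]
        Suc.IH[OF Suc.prems(1,2) Ck_on_frechet_derivative[OF f] Ck_on_Suc_imp[OF g]]
      by (intro Ck_on_add Suc.prems(1))
  qed
qed

lemma Ck_on_diff:
  assumes "open U" "Ck_on n U f" "Ck_on n U g"
  shows "Ck_on n U (\<lambda>x. f x - g x)"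
  using Ck_on_add[OF assms(1,2)
      Ck_on_bounded_linear[OF assms(1) bounded_linear_minus[OF bounded_linear_ident] assms(3)]]
  by simp

lemma Ck_on_mult:
  "open U \<Longrightarrow> Ck_on n U (f :: _ \<Rightarrow> real) \<Longrightarrow> Ck_on n U g \<Longrightarrow> Ck_on n U (\<lambda>x. f x * g x)"
  by (rule Ck_on_bounded_bilinear[OF _ bounded_bilinear_mult])

lemma Ck_on_sum:
  "finite S \<Longrightarrow> open U \<Longrightarrow> (\<And>j. j \<in> S \<Longrightarrow> Ck_on n U (f j)) \<Longrightarrow> Ck_on n U (\<lambda>x. \<Sum>j\<in>S. f j x)"
  by (induction S rule: finite_induct) (simp_all add: Ck_on_const Ck_on_add)

lemma Ck_on_bounded_linear_map:
  assumes "open U" "bounded_linear l"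
  shows "Ck_on n U l"
proof (cases n)
  case 0
  then show ?thesis using assms by (simp add: linear_continuous_on)
next
  case (Suc m)
  show ?thesis unfolding Suc
  proof (rule Ck_on_SucI[OF \<open>open U\<close>])
    show "(l has_derivative l) (at x)" for x
      using \<open>bounded_linear l\<close> by (rule bounded_linear_imp_has_derivative)
    show "Ck_on m U (\<lambda>x. l i)" for i by (rule Ck_on_const)
  qed
qed

lemma Ck_on_compose:
  assumes "open U" "open V" "\<And>x. x \<in> U \<Longrightarrow> f x \<in> V" "Ck_on n V g" "Ck_on n U f"
  shows "Ck_on n U (\<lambda>x. g (f x))"
  using assms(4,5)
proof (induction n arbitrary: g)
  case 0
  have "f ` U \<subseteq> V" using assms(3) by (simp add: image_subset_iff)
  then show ?case
    using continuous_on_compose2[of V g U f] 0 by simp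
next
  case (Suc n)
  show ?case
  proof (rule Ck_on_SucI[OF \<open>open U\<close>])
    fix x assume "x \<in> U"
    show "((\<lambda>x. g (f x)) has_derivative
        (\<lambda>h. frechet_derivative g (at (f x)) (frechet_derivative f (at x) h))) (at x)"
      using diff_chain_at[OF Ck_on_has_derivative[OF assms(1) Suc.prems(2) \<open>x \<in> U\<close>]
          Ck_on_has_derivative[OF assms(2) Suc.prems(1) assms(3)[OF \<open>x \<in> U\<close>]]]
      by (simp add: o_def)
  next
    fix i :: 'a assume "i \<in> Basis"
    have chain_rule: "frechet_derivative g (at (f x)) (frechet_derivative f (at x) i) =
       (\<Sum>j\<in>Basis. (frechet_derivative f (at x) i \<bullet> j) *\<^sub>R frechet_derivative g (at (f x)) j)"
      if "x \<in> U" for x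
    proof -
      have "linear (frechet_derivative g (at (f x)))"
        using Ck_on_has_derivative[OF assms(2) Suc.prems(1) assms(3)[OF that]]
        by (rule has_derivative_linear)
      then show ?thesis
        by (subst euclidean_representation[symmetric, of "frechet_derivative f (at x) i"])
          (simp add: linear_sum linear_scale)
    qed
    have "Ck_on n U (\<lambda>x. \<Sum>j\<in>Basis. (frechet_derivative f (at x) i \<bullet> j) *\<^sub>R
        frechet_derivative g (at (f x)) j)"
    proof (rule Ck_on_sum[OF finite_Basis assms(1)])
      fix j :: 'b assume "j \<in> Basis"
      have "Ck_on n U (\<lambda>x. frechet_derivative f (at x) i \<bullet> j)"
        using Ck_on_bounded_linear[OF assms(1) bounded_linear_inner_left
            Ck_on_frechet_derivative[OF Suc.prems(2) \<open>i \<in> Basis\<close>]] .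
      moreover have "Ck_on n U (\<lambda>x. frechet_derivative g (at (f x)) j)"
        using Suc.IH[OF Ck_on_frechet_derivative[OF Suc.prems(1) \<open>j \<in> Basis\<close>]
            Ck_on_Suc_imp[OF Suc.prems(2)]] .
      ultimately show "Ck_on n U (\<lambda>x. (frechet_derivative f (at x) i \<bullet> j) *\<^sub>R
          frechet_derivative g (at (f x)) j)"
        by (rule Ck_on_bounded_bilinear[OF assms(1) bounded_bilinear_scaleR])
    qed
    then show "Ck_on n U (\<lambda>x. frechet_derivative g (at (f x)) (frechet_derivative f (at x) i))"
      by (rule Ck_on_cong[OF assms(1), rotated]) (simp add: chain_rule)
  qed
qed

lemma Ck_on_inverse_real: "Ck_on n (-{0}) (\<lambda>x::real. inverse x)"
proof (induction n)
  case 0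
  then show ?case by (simp add: continuous_on_inverse continuous_on_id)
next
  case (Suc n)
  have open_nonzero: "open (-{0::real})" by (simp add: open_Compl)
  show ?case
  proof (rule Ck_on_SucI[OF open_nonzero])
    fix x :: real assume "x \<in> -{0}"
    then show "((\<lambda>x. inverse x) has_derivative (\<lambda>h. - (inverse x * h * inverse x))) (at x)"
      using has_derivative_inverse'[of x UNIV] by simp
  next
    fix i :: real assume "i \<in> Basis"
    have "Ck_on n (-{0}) (\<lambda>x::real. - (inverse x * inverse x))"
      by (rule Ck_on_bounded_linear[OF open_nonzero bounded_linear_minus[OF bounded_linear_ident]
            Ck_on_mult[OF open_nonzero Suc.IH Suc.IH]])
    then show "Ck_on n (-{0}) (\<lambda>x::real. - (inverse x * i * inverse x))"
      using \<open>i \<in> Basis\<close> by simp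
  qed
qed

lemma Ck_on_inverse:
  fixes f :: "'a::euclidean_space \<Rightarrow> real"
  assumes "open U" "Ck_on n U f" "\<And>x. x \<in> U \<Longrightarrow> f x \<noteq> 0"
  shows "Ck_on n U (\<lambda>x. inverse (f x))"
  by (rule Ck_on_compose[OF assms(1) _ _ Ck_on_inverse_real assms(2)])
    (use assms(3) in \<open>auto simp: open_Compl\<close>)

section \<open>Partial derivatives in the plane\<close>

definition Ds :: "(real \<times> real \<Rightarrow> 'c::real_normed_vector) \<Rightarrow> real \<times> real \<Rightarrow> 'c" where
  "Ds f p = frechet_derivative f (at p) (1, 0)"

definition Dt :: "(real \<times> real \<Rightarrow> 'c::real_normed_vector) \<Rightarrow> real \<times> real \<Rightarrow> 'c" where
  "Dt f p = frechet_derivative f (at p) (0, 1)"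

lemma Ck_on_Ds: "Ck_on (Suc n) U f \<Longrightarrow> Ck_on n U (Ds f)"
  unfolding Ds_def[abs_def] by (rule Ck_on_frechet_derivative) (auto simp: Basis_prod_def)

lemma Ck_on_Dt: "Ck_on (Suc n) U f \<Longrightarrow> Ck_on n U (Dt f)"
  unfolding Dt_def[abs_def] by (rule Ck_on_frechet_derivative) (auto simp: Basis_prod_def)

lemma has_vector_derivative_Ds:
  assumes "open U" "Ck_on (Suc n) U f" "(s, t) \<in> U"
  shows "((\<lambda>s. f (s, t)) has_vector_derivative Ds f (s, t)) (at s within S)"
proof -
  have f': "(f has_derivative frechet_derivative f (at (s, t))) (at (s, t))"
    by (rule Ck_on_has_derivative[OF assms])
  have "((\<lambda>s. (s, t)) has_derivative (\<lambda>h. (h, 0))) (at s within S)"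
    by (auto intro!: derivative_eq_intros)
  from diff_chain_within[OF this has_derivative_at_withinI[OF f']]
  have "((\<lambda>s. f (s, t)) has_derivative (\<lambda>h. frechet_derivative f (at (s, t)) (h, 0)))
      (at s within S)"
    by (simp add: o_def)
  moreover have "frechet_derivative f (at (s, t)) (h, 0) = h *\<^sub>R Ds f (s, t)" for h
    using linear_cmul[OF has_derivative_linear[OF f'], of h "(1, 0)"] by (simp add: Ds_def)
  ultimately show ?thesis
    by (simp add: has_vector_derivative_def)
qed

lemma has_vector_derivative_Dt:
  assumes "open U" "Ck_on (Suc n) U f" "(s, t) \<in> U"
  shows "((\<lambda>t. f (s, t)) has_vector_derivative Dt f (s, t)) (at t within S)"
proof -
  have f': "(f has_derivative frechet_derivative f (at (s, t))) (at (s, t))"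
    by (rule Ck_on_has_derivative[OF assms])
  have "((\<lambda>t. (s, t)) has_derivative (\<lambda>h. (0, h))) (at t within S)"
    by (auto intro!: derivative_eq_intros)
  from diff_chain_within[OF this has_derivative_at_withinI[OF f']]
  have "((\<lambda>t. f (s, t)) has_derivative (\<lambda>h. frechet_derivative f (at (s, t)) (0, h)))
      (at t within S)"
    by (simp add: o_def)
  moreover have "frechet_derivative f (at (s, t)) (0, h) = h *\<^sub>R Dt f (s, t)" for h
    using linear_cmul[OF has_derivative_linear[OF f'], of h "(0, 1)"] by (simp add: Dt_def)
  ultimately show ?thesis
    by (simp add: has_vector_derivative_def)
qed

lemma Ck_on_has_vector_derivative_at:
  fixes f :: "real \<Rightarrow> 'c::real_normed_vector"
  assumes "open U" "Ck_on (Suc n) U f" "x \<in> U"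
  shows "(f has_vector_derivative frechet_derivative f (at x) 1) (at x)"
proof -
  have f': "(f has_derivative frechet_derivative f (at x)) (at x)"
    by (rule Ck_on_has_derivative[OF assms])
  have "frechet_derivative f (at x) h = h *\<^sub>R frechet_derivative f (at x) 1" for h
    using linear_cmul[OF has_derivative_linear[OF f'], of h 1] by simp
  then have "frechet_derivative f (at x) = (\<lambda>h. h *\<^sub>R frechet_derivative f (at x) 1)"
    by (rule ext)
  then show ?thesis
    using f' by (simp add: has_vector_derivative_def)
qed

lemma Ck_on_has_vector_derivative:
  fixes f :: "real \<Rightarrow> 'c::real_normed_vector"
  assumes "open U" "Ck_on (Suc n) U f" "x \<in> U"
  shows "(f has_vector_derivative vector_derivative f (at x)) (at x within S)"
  using Ck_on_has_vector_derivative_at[OF assms]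
  by (simp add: vector_derivative_at has_vector_derivative_at_within)

lemma Ck_on_vector_derivative:
  fixes f :: "real \<Rightarrow> 'c::real_normed_vector"
  assumes "open U" "Ck_on (Suc n) U f"
  shows "Ck_on n U (\<lambda>x. vector_derivative f (at x))"
proof (rule Ck_on_cong[OF assms(1) _ Ck_on_frechet_derivative[OF assms(2), of 1]])
  show "frechet_derivative f (at x) 1 = vector_derivative f (at x)" if "x \<in> U" for x
    using Ck_on_has_vector_derivative_at[OF assms that] by (simp add: vector_derivative_at)
qed simp

lemma continuous_on_slice:
  assumes "continuous_on U g" "\<And>s. s \<in> S \<Longrightarrow> (s, t) \<in> U"
  shows "continuous_on S (\<lambda>s. g (s, t))"
  by (rule continuous_on_compose2[OF assms(1)]) (use assms(2) in \<open>auto intro: continuous_intros\<close>)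

lemma continuous_on_swapped:
  assumes "continuous_on U g" "\<And>s t. s \<in> S \<Longrightarrow> t \<in> J \<Longrightarrow> (s, t) \<in> U"
  shows "continuous_on (J \<times> S) (\<lambda>(t, s). g (s, t))"
proof -
  have "continuous_on (J \<times> S) (\<lambda>p. (snd p, fst p))"
    by (intro continuous_on_Pair continuous_on_snd continuous_on_fst continuous_on_id)
  moreover have "(\<lambda>p. (snd p, fst p)) ` (J \<times> S) \<subseteq> U"
    using assms(2) by auto
  ultimately have "continuous_on (J \<times> S) (\<lambda>p. g (snd p, fst p))"
    by (rule continuous_on_compose2[OF assms(1)])
  then show ?thesis by (simp add: split_beta)
qed

lemma has_vector_derivative_parametric_integral:
  fixes f :: "real \<times> real \<Rightarrow> 'c::euclidean_space"
  assumes "open U" "Ck_on (Suc n) U f" "convex J" "\<And>s t. s \<in> {a..b} \<Longrightarrow> t \<in> J \<Longrightarrow> (s, t) \<in> U"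
    and "t \<in> J"
  shows "((\<lambda>t. integral {a..b} (\<lambda>s. f (s, t))) has_vector_derivative
      integral {a..b} (\<lambda>s. Dt f (s, t))) (at t within J)"
  unfolding cbox_interval[symmetric]
proof (rule leibniz_rule_vector_derivative)
  show "((\<lambda>t. f (s, t)) has_vector_derivative Dt f (s, t)) (at t within J)"
    if "t \<in> J" "s \<in> cbox a b" for s t
    by (rule has_vector_derivative_Dt[OF assms(1,2)]) (use assms(4) that in auto)
  show "(\<lambda>s. f (s, t)) integrable_on cbox a b" if "t \<in> J" for t
    using continuous_on_slice[OF Ck_on_continuous_on[OF assms(2)], of "{a..b}" t] assms(4) that
    by (simp add: integrable_continuous_interval)
  show "continuous_on (J \<times> cbox a b) (\<lambda>(t, s). Dt f (s, t))"
    using continuous_on_swapped[where S="{a..b}" and J=J, OF Ck_on_continuous_on[OF Ck_on_Dt[OF assms(2)]]]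
      assms(4) by simp
qed (use assms in auto)

lemma Ck_on_parametric_integral:
  fixes f :: "real \<times> real \<Rightarrow> real"
  assumes "open U" "Ck_on n U f" "open J" "convex J"
    and "\<And>s t. s \<in> {a..b} \<Longrightarrow> t \<in> J \<Longrightarrow> (s, t) \<in> U"
  shows "Ck_on n J (\<lambda>t. integral {a..b} (\<lambda>s. f (s, t)))"
  using assms(2)
proof (induction n arbitrary: f)
  case 0
  have "continuous_on (J \<times> {a..b}) (\<lambda>(t, s). f (s, t))"
    using continuous_on_swapped[where S="{a..b}" and J=J, OF Ck_on_continuous_on[OF 0]] assms(5) by simp
  then show ?case
    using integral_continuous_on_param[of J a b "\<lambda>t s. f (s, t)"] by (simp add: cbox_interval)
next
  case (Suc n)
  show ?case
  proof (rule Ck_on_SucI[OF assms(3)])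
    fix t assume "t \<in> J"
    from has_vector_derivative_parametric_integral[OF assms(1) Suc.prems assms(4,5) this]
    show "((\<lambda>t. integral {a..b} (\<lambda>s. f (s, t))) has_derivative
        (\<lambda>h. h *\<^sub>R integral {a..b} (\<lambda>s. Dt f (s, t)))) (at t)"
      by (simp add: at_within_open[OF \<open>t \<in> J\<close> assms(3)] has_vector_derivative_def)
  next
    fix i :: real assume "i \<in> Basis"
    then show "Ck_on n J (\<lambda>t. i *\<^sub>R integral {a..b} (\<lambda>s. Dt f (s, t)))"
      using Suc.IH[OF Ck_on_Dt[OF Suc.prems]] by simp
  qed
qed

lemma has_vector_derivative_eq_on_open:
  assumes "(f has_vector_derivative a) (at x)" "(g has_vector_derivative b) (at x)"
    "open S" "x \<in> S" "\<And>y. y \<in> S \<Longrightarrow> f y = g y"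
  shows "a = b"
  using vector_derivative_unique_at[OF has_vector_derivative_transform_within_open[OF assms(1,3,4,5)] assms(2)] .

lemma Dt_difference_eq_integral:
  fixes f :: "real \<times> real \<Rightarrow> 'c::euclidean_space"
  assumes "open U" "Ck_on (Suc (Suc n)) U f" "a \<le> b"
    and "open J" "convex J" "t0 \<in> J" "\<And>s t. s \<in> {a..b} \<Longrightarrow> t \<in> J \<Longrightarrow> (s, t) \<in> U"
  shows "Dt f (b, t0) - Dt f (a, t0) = integral {a..b} (\<lambda>s. Dt (Ds f) (s, t0))"
proof -
  have f: "Ck_on (Suc n) U f" using assms(2) by (rule Ck_on_Suc_imp)
  have "((\<lambda>t. f (b, t) - f (a, t)) has_vector_derivative Dt f (b, t0) - Dt f (a, t0)) (at t0)"
    using assms(3,6,7)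
    by (intro has_vector_derivative_diff has_vector_derivative_Dt[OF assms(1) f]) auto
  moreover have "((\<lambda>t. integral {a..b} (\<lambda>s. Ds f (s, t))) has_vector_derivative
      integral {a..b} (\<lambda>s. Dt (Ds f) (s, t0))) (at t0)"
    using has_vector_derivative_parametric_integral[OF assms(1) Ck_on_Ds[OF assms(2)] assms(5,7,6)]
    by (simp add: at_within_open[OF assms(6,4)])
  moreover have "f (b, t) - f (a, t) = integral {a..b} (\<lambda>s. Ds f (s, t))" if "t \<in> J" for t
  proof -
    have "((\<lambda>s. Ds f (s, t)) has_integral (f (b, t) - f (a, t))) {a..b}"
      using assms(3,7) that
      by (intro fundamental_theorem_of_calculus has_vector_derivative_Ds[OF assms(1) f]) auto
    then show ?thesis by (simp add: integral_unique)
  qed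
  ultimately show ?thesis
    by (rule has_vector_derivative_eq_on_open[OF _ _ assms(4,6)])
qed

lemma Ds_Dt_commute:
  fixes f :: "real \<times> real \<Rightarrow> 'c::euclidean_space"
  assumes "open U" "Ck_on (Suc (Suc n)) U f" "(s0, t0) \<in> U"
  shows "Ds (Dt f) (s0, t0) = Dt (Ds f) (s0, t0)"
proof -
  obtain r where "r > 0" and ball: "ball (s0, t0) r \<subseteq> U"
    using assms(1,3) open_contains_ball by blast
  define e where "e = r / 2"
  have "e > 0" using \<open>r > 0\<close> by (simp add: e_def)
  define a where "a = s0 - e"
  define J where "J = {t0 - e<..<t0 + e}"
  have J: "open J" "convex J" "t0 \<in> J"
    using \<open>e > 0\<close> by (auto simp: J_def)
  have in_U: "(s, t) \<in> U" if "s \<in> {a..s0 + e}" "t \<in> J" for s t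
  proof -
    have "dist (s0, t0) (s, t) \<le> dist s0 s + dist t0 t"
      using norm_Pair_le[of "s0 - s" "t0 - t"] by (simp add: dist_norm)
    also have "\<dots> < r"
      using that by (auto simp: a_def J_def e_def dist_real_def)
    finally show ?thesis using ball by auto
  qed
  have Dt_eq: "Dt f (s, t0) = Dt f (a, t0) + integral {a..s} (\<lambda>u. Dt (Ds f) (u, t0))"
    if "s \<in> {a..s0 + e}" for s
    using Dt_difference_eq_integral[OF assms(1,2) _ J, of a s] in_U that
    by (auto simp: algebra_simps)
  have s0: "s0 \<in> {a<..<s0 + e}"
    using \<open>e > 0\<close> by (simp add: a_def)
  have Ds_Dt: "((\<lambda>s. Dt f (s, t0)) has_vector_derivative Ds (Dt f) (s0, t0)) (at s0)"
    by (rule has_vector_derivative_Ds[OF assms(1) Ck_on_Dt[OF assms(2)] assms(3)])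
  have "continuous_on {a..s0 + e} (\<lambda>u. Dt (Ds f) (u, t0))"
    using continuous_on_slice[OF Ck_on_continuous_on[OF Ck_on_Dt[OF Ck_on_Ds[OF assms(2)]]]] in_U J(3)
    by blast
  then have "((\<lambda>s. integral {a..s} (\<lambda>u. Dt (Ds f) (u, t0))) has_vector_derivative
      Dt (Ds f) (s0, t0)) (at s0)"
    using integral_has_vector_derivative[of a "s0 + e" _ s0] s0
    by (simp add: at_within_interior[of s0 "{a..s0 + e}"])
  then have "((\<lambda>s. Dt f (a, t0) + integral {a..s} (\<lambda>u. Dt (Ds f) (u, t0))) has_vector_derivative
      Dt (Ds f) (s0, t0)) (at s0)"
    using has_vector_derivative_add[OF has_vector_derivative_const[of "Dt f (a, t0)"]] by simp
  then show ?thesis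
    by (rule has_vector_derivative_eq_on_open[OF Ds_Dt _ _ s0]) (auto intro!: Dt_eq)
qed

section \<open>Flat functions and bump functions\<close>

definition flat :: "nat \<Rightarrow> real \<Rightarrow> real" where
  "flat k x = (if x > 0 then exp (- inverse x) / x ^ k else 0)"

lemma flat_tendsto_0: "(flat k \<longlongrightarrow> 0) (at 0)"
proof -
  have r: "((\<lambda>x. exp (- inverse x) / x ^ k) \<longlongrightarrow> 0) (at_right (0::real))"
  proof -
    have "((\<lambda>x. (inverse x) ^ k / exp (inverse x)) \<longlongrightarrow> 0) (at_right (0::real))"
      by (rule filterlim_compose[OF tendsto_power_div_exp_0 filterlim_inverse_at_top_right])
    note lim = this
    have ev: "eventually (\<lambda>x. (inverse x) ^ k / exp (inverse x) = exp (- inverse x) / x ^ k) (at_right (0::real))"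
      by (auto simp: eventually_at_right_field exp_minus field_simps power_inverse intro!: exI[of _ 1])
    show ?thesis by (rule iffD1[OF tendsto_cong[OF ev] lim])
  qed
  have "(flat k \<longlongrightarrow> 0) (at_right 0)"
  proof -
    have ev: "eventually (\<lambda>x. exp (- inverse x) / x ^ k = flat k x) (at_right (0::real))"
      by (auto simp: eventually_at_right_field flat_def intro!: exI[of _ 1])
    show ?thesis by (rule iffD1[OF tendsto_cong[OF ev] r])
  qed
  moreover have "(flat k \<longlongrightarrow> 0) (at_left 0)"
  proof -
    have ev: "eventually (\<lambda>x. 0 = flat k x) (at_left (0::real))"
      by (auto simp: eventually_at_left_field flat_def intro!: exI[of _ "-1"])
    show ?thesis by (rule iffD1[OF tendsto_cong[OF ev] tendsto_const])
  qed
  ultimately show ?thesis by (simp add: filterlim_at_split)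
qed

lemma flat_0 [simp]: "flat k 0 = 0"
  by (simp add: flat_def)

lemma continuous_on_flat: "continuous_on UNIV (flat k)"
proof -
  have "isCont (flat k) x" for x
  proof (cases "x = 0")
    case True then show ?thesis using flat_tendsto_0 by (simp add: isCont_def)
  next
    case False
    show ?thesis
    proof (cases "x > 0")
      case True
      have c: "isCont (\<lambda>x. exp (- inverse x) / x ^ k) x" using True by (auto intro!: continuous_intros)
      have ev: "\<forall>\<^sub>F y in nhds x. exp (- inverse y) / y ^ k = flat k y"
        using eventually_nhds_in_open[of "{0<..}" x] True by (auto simp: flat_def elim!: eventually_mono)
      show ?thesis by (rule iffD1[OF isCont_cong[OF ev] c])
    next
      case False
      with \<open>x \<noteq> 0\<close> have "x < 0" by simp
      have ev: "\<forall>\<^sub>F y in nhds x. 0 = flat k y"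
        using eventually_nhds_in_open[of "{..<0}" x] \<open>x < 0\<close> by (auto simp: flat_def elim!: eventually_mono)
      show ?thesis by (rule iffD1[OF isCont_cong[OF ev] continuous_const])
    qed
  qed
  then show ?thesis by (simp add: continuous_at_imp_continuous_on)
qed

lemma flat_has_real_derivative:
  "(flat k has_real_derivative (- real k * flat (k+1) x + flat (k+2) x)) (at x)"
proof (cases "x = 0")
  case True
  have "((\<lambda>h. (flat k (0 + h) - flat k 0) / h) \<longlongrightarrow> 0) (at 0)"
  proof -
    have ev: "\<forall>\<^sub>F h in at 0. flat (k+1) h = (flat k (0 + h) - flat k 0) / h"
      by (auto simp: flat_def eventually_at_filter field_simps)
    show ?thesis by (rule iffD1[OF tendsto_cong[OF ev] flat_tendsto_0[of "k+1"]])
  qed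
  then show ?thesis using True by (simp add: DERIV_def)
next
  case False
  show ?thesis
  proof (cases "x > 0")
    case True
    let ?E = "exp (- inverse x)" and ?i = "inverse x"
    have d: "((\<lambda>x. exp (- inverse x) * inverse x ^ k) has_real_derivative
        ?E * (?i * ?i) * ?i ^ k + ?E * (real k * ?i ^ (k - 1) * (- (?i * ?i)))) (at x)"
      using True by (auto intro!: derivative_eq_intros)
    have eq: "?E * (?i * ?i) * ?i ^ k + ?E * (real k * ?i ^ (k - 1) * (- (?i * ?i)))
        = - real k * flat (k+1) x + flat (k+2) x"
    proof (cases k)
      case 0
      then show ?thesis using True by (simp add: flat_def field_simps power2_eq_square)
    next
      case (Suc m)
      then show ?thesis
        using True by (simp add: flat_def field_simps power2_eq_square power_inverse)
    qed
    have "((\<lambda>x. exp (- inverse x) / x ^ k) has_real_derivative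
        - real k * flat (k+1) x + flat (k+2) x) (at x)"
      using d unfolding eq by (simp add: divide_inverse power_inverse)
    moreover have ev: "\<forall>\<^sub>F y in nhds x. exp (- inverse y) / y ^ k = flat k y"
      using eventually_nhds_in_open[of "{0<..}" x] True by (auto simp: flat_def elim!: eventually_mono)
    ultimately show ?thesis using iffD1[OF DERIV_cong_ev[OF refl ev refl]] by blast
  next
    case False
    with \<open>x \<noteq> 0\<close> have "x < 0" by simp
    have ev: "\<forall>\<^sub>F y in nhds x. 0 = flat k y"
      using eventually_nhds_in_open[of "{..<0}" x] \<open>x < 0\<close> by (auto simp: flat_def elim!: eventually_mono)
    have "(flat k has_real_derivative 0) (at x)"
      by (rule iffD1[OF DERIV_cong_ev[OF refl ev refl] DERIV_const])
    then show ?thesis using \<open>x < 0\<close> by (simp add: flat_def)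
  qed
qed

lemma Ck_on_flat: "Ck_on n UNIV (flat k)"
proof (induction n arbitrary: k)
  case 0 then show ?case using continuous_on_flat by simp
next
  case (Suc n)
  show ?case
  proof (rule Ck_on_SucI)
    fix x :: real
    show "(flat k has_derivative (\<lambda>h. h * (- real k * flat (k+1) x + flat (k+2) x))) (at x)"
      using flat_has_real_derivative[of k x] by (simp add: has_field_derivative_def mult_commute_abs)
  next
    fix i :: real assume "i \<in> Basis"
    then have "i = 1" by simp
    have "Ck_on n UNIV (\<lambda>x. (- real k) * flat (k+1) x + flat (k+2) x)"
      by (rule Ck_on_add[OF open_UNIV Ck_on_bounded_bilinear[OF open_UNIV bounded_bilinear_mult Ck_on_const Suc.IH] Suc.IH])
    then show "Ck_on n UNIV (\<lambda>x. i * (- real k * flat (k+1) x + flat (k+2) x))" using \<open>i = 1\<close> by simp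
  qed simp
qed

definition bump :: "real \<Rightarrow> real \<Rightarrow> real \<Rightarrow> real" where
  "bump a b s = flat 0 (s - a) * flat 0 (b - s)"

lemma Ck_on_bump: "Ck_on n UNIV (bump a b)"
proof -
  have id: "Ck_on n UNIV (\<lambda>s::real. s)"
    by (rule Ck_on_bounded_linear_map[OF open_UNIV bounded_linear_ident])
  have "Ck_on n UNIV (\<lambda>s. flat 0 (s - a))"
    by (rule Ck_on_compose[OF open_UNIV open_UNIV _ Ck_on_flat Ck_on_diff[OF open_UNIV id Ck_on_const]])
      simp
  moreover have "Ck_on n UNIV (\<lambda>s. flat 0 (b - s))"
    by (rule Ck_on_compose[OF open_UNIV open_UNIV _ Ck_on_flat Ck_on_diff[OF open_UNIV Ck_on_const id]])
      simp
  ultimately show ?thesis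
    unfolding bump_def[abs_def] by (rule Ck_on_mult[OF open_UNIV])
qed

lemma bump_eq_0: "s \<le> a \<or> s \<ge> b \<Longrightarrow> bump a b s = 0"
  by (auto simp: bump_def flat_def)

lemma bump_pos: "a < s \<Longrightarrow> s < b \<Longrightarrow> bump a b s > 0"
  by (auto simp: bump_def flat_def)

lemma bump_nonneg: "bump a b s \<ge> 0"
  by (auto simp: bump_def flat_def)

section \<open>Properties of slices that persist for small parameters\<close>

lemma continuous_on_slices_uniformly_close:
  fixes F :: "real \<times> real \<Rightarrow> 'b::metric_space"
  assumes "continuous_on ({a..b} \<times> {-T..T}) F" "T > 0" "\<epsilon> > 0"
  obtains \<delta> where "\<delta> > 0" "\<delta> \<le> T"
    "\<And>s t. s \<in> {a..b} \<Longrightarrow> \<bar>t\<bar> \<le> \<delta> \<Longrightarrow> dist (F (s, t)) (F (s, 0)) < \<epsilon>"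
proof -
  have "uniformly_continuous_on ({a..b} \<times> {-T..T}) F"
    by (rule compact_uniformly_continuous[OF assms(1)]) (intro compact_Times compact_Icc)
  then obtain d where d: "d > 0" "\<And>p q. p \<in> {a..b} \<times> {-T..T} \<Longrightarrow> q \<in> {a..b} \<times> {-T..T} \<Longrightarrow>
      dist q p < d \<Longrightarrow> dist (F q) (F p) < \<epsilon>"
    unfolding uniformly_continuous_on_def using assms(3) by metis
  show ?thesis
  proof (rule that[of "min (d/2) T"])
    fix s t assume st: "s \<in> {a..b}" "\<bar>t\<bar> \<le> min (d/2) T"
    have "dist (s, t) (s, 0) = \<bar>t\<bar>"
      by (simp add: dist_Pair_Pair dist_real_def)
    then have "dist (s, t) (s, 0) < d"
      using st d by simp
    moreover have "(s, t) \<in> {a..b} \<times> {-T..T}" "(s, 0) \<in> {a..b} \<times> {-T..T}"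
      using st assms(2) by auto
    ultimately show "dist (F (s, t)) (F (s, 0)) < \<epsilon>" using d(2) by blast
  qed (use d assms(2) in auto)
qed

lemma continuous_on_pos_near_slice:
  fixes F :: "real \<times> real \<Rightarrow> real"
  assumes F: "continuous_on ({a..b} \<times> {-T..T}) F" and "T > 0" "a \<le> b"
    and pos: "\<And>s. s \<in> {a..b} \<Longrightarrow> F (s, 0) > 0"
  obtains \<delta> where "\<delta> > 0" "\<delta> \<le> T" "\<And>s t. s \<in> {a..b} \<Longrightarrow> \<bar>t\<bar> \<le> \<delta> \<Longrightarrow> F (s, t) > 0"
proof -
  have slice: "continuous_on {a..b} (\<lambda>s. F (s, 0))"
    by (rule continuous_on_slice[OF F]) (use \<open>T > 0\<close> in auto)
  obtain s0 where s0: "s0 \<in> {a..b}" "\<And>s. s \<in> {a..b} \<Longrightarrow> F (s0, 0) \<le> F (s, 0)"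
    using continuous_attains_inf[OF compact_Icc _ slice] \<open>a \<le> b\<close> by auto
  obtain \<delta> where \<delta>: "\<delta> > 0" "\<delta> \<le> T"
    "\<And>s t. s \<in> {a..b} \<Longrightarrow> \<bar>t\<bar> \<le> \<delta> \<Longrightarrow> dist (F (s, t)) (F (s, 0)) < F (s0, 0)"
    using continuous_on_slices_uniformly_close[OF F \<open>T > 0\<close> pos[OF s0(1)]] by blast
  show ?thesis
  proof (rule that[OF \<delta>(1,2)])
    fix s t assume st: "s \<in> {a..b}" "\<bar>t\<bar> \<le> \<delta>"
    show "F (s, t) > 0"
      using \<delta>(3)[OF st] s0(2)[OF st(1)] by (simp add: dist_real_def)
  qed
qed

lemma has_vector_derivative_nearly_constant_imp_neq:
  fixes f :: "real \<Rightarrow> 'b::real_normed_vector"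
  assumes "u < v" "\<And>x. x \<in> {u..v} \<Longrightarrow> (f has_vector_derivative f' x) (at x within {u..v})"
    and "\<And>x. x \<in> {u..v} \<Longrightarrow> norm (f' x - f' u) \<le> B" "B < norm (f' u)"
  shows "f u \<noteq> f v"
proof
  assume "f u = f v"
  have "norm (f v - f u - (v - u) *\<^sub>R f' u) \<le> norm (v - u) * B"
    by (rule vector_differentiable_bound_linearization[of "{u..v}" f f'])
      (use assms in \<open>auto simp: closed_segment_eq_real_ivl\<close>)
  then have "(v - u) * norm (f' u) \<le> (v - u) * B"
    using \<open>f u = f v\<close> \<open>u < v\<close> by simp
  then show False
    using assms(1,4) by (simp add: mult_le_cancel_left_pos)
qed

lemma inj_on_chord_lower_bound:
  fixes c :: "real \<Rightarrow> 'b::real_normed_vector"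
  assumes "continuous_on {a..b} c" "inj_on c {a..b}" "d > 0"
  obtains m where "m > 0"
    "\<And>u v. u \<in> {a..b} \<Longrightarrow> v \<in> {a..b} \<Longrightarrow> u + d \<le> v \<Longrightarrow> m \<le> norm (c v - c u)"
proof -
  define P where "P = ({a..b} \<times> {a..b}) \<inter> {p. fst p + d \<le> snd p}"
  have "compact P"
    unfolding P_def
    by (intro compact_Int_closed compact_Times compact_Icc closed_Collect_le continuous_intros)
  show ?thesis
  proof (cases "P = {}")
    case True
    show ?thesis
    proof (rule that[of 1])
      fix u v assume "u \<in> {a..b}" "v \<in> {a..b}" "u + d \<le> v"
      then have "(u, v) \<in> P" by (simp add: P_def)
      with True show "1 \<le> norm (c v - c u)" by simp
    qed simp
  next
    case False
    have "continuous_on P (\<lambda>p. norm (c (snd p) - c (fst p)))"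
      by (intro continuous_on_norm continuous_on_diff continuous_on_compose2[OF assms(1)]
          continuous_intros) (auto simp: P_def)
    then obtain p0 where p0: "p0 \<in> P"
      "\<And>p. p \<in> P \<Longrightarrow> norm (c (snd p0) - c (fst p0)) \<le> norm (c (snd p) - c (fst p))"
      using continuous_attains_inf[OF \<open>compact P\<close> False] by blast
    have "c (snd p0) \<noteq> c (fst p0)"
      using p0(1) assms(2,3) by (auto simp: P_def dest: inj_onD)
    then show ?thesis
      using that[of "norm (c (snd p0) - c (fst p0))"] p0(2) by (fastforce simp: P_def)
  qed
qed

lemma slices_separated_far:
  fixes e :: "real \<times> real \<Rightarrow> 'b::real_normed_vector"
  assumes "T > 0" and e: "continuous_on ({a..b} \<times> {-T..T}) e"
    and inj: "inj_on (\<lambda>s. e (s, 0)) {a..b}" and "d > 0"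
  obtains \<delta> where "\<delta> > 0" "\<delta> \<le> T"
    "\<And>t u v. \<bar>t\<bar> \<le> \<delta> \<Longrightarrow> u \<in> {a..b} \<Longrightarrow> v \<in> {a..b} \<Longrightarrow> u + d \<le> v \<Longrightarrow> e (u, t) \<noteq> e (v, t)"
proof -
  obtain m where m: "m > 0"
    "\<And>u v. u \<in> {a..b} \<Longrightarrow> v \<in> {a..b} \<Longrightarrow> u + d \<le> v \<Longrightarrow> m \<le> norm (e (v, 0) - e (u, 0))"
    using inj_on_chord_lower_bound[OF continuous_on_slice[OF e] inj \<open>d > 0\<close>] \<open>T > 0\<close> by auto
  obtain \<delta> where \<delta>: "\<delta> > 0" "\<delta> \<le> T"
    "\<And>s t. s \<in> {a..b} \<Longrightarrow> \<bar>t\<bar> \<le> \<delta> \<Longrightarrow> dist (e (s, t)) (e (s, 0)) < m/2"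
    using continuous_on_slices_uniformly_close[OF e \<open>T > 0\<close>, of "m/2"] m(1) by auto
  show ?thesis
  proof (rule that[OF \<delta>(1,2)])
    fix t u v assume t: "\<bar>t\<bar> \<le> \<delta>" and uv: "u \<in> {a..b}" "v \<in> {a..b}" "u + d \<le> v"
    show "e (u, t) \<noteq> e (v, t)"
    proof
      assume "e (u, t) = e (v, t)"
      then have "norm (e (v, 0) - e (u, 0)) \<le> dist (e (v, t)) (e (v, 0)) + dist (e (u, t)) (e (u, 0))"
        using norm_triangle_ineq4[of "e (v, 0) - e (v, t)" "e (u, 0) - e (u, t)"]
        by (simp add: dist_norm norm_minus_commute algebra_simps)
      also have "\<dots> < m"
        using \<delta>(3)[OF uv(1) t] \<delta>(3)[OF uv(2) t] by simp
      finally show False using m(2)[OF uv] by simp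
    qed
  qed
qed

text \<open>On short parameter intervals the slices are almost straight, since their unit speed
  derivative varies little.\<close>
lemma slices_separated_near:
  fixes e e' :: "real \<times> real \<Rightarrow> 'b::real_normed_vector"
  assumes "T > 0" and e': "continuous_on ({a..b} \<times> {-T..T}) e'"
    and der: "\<And>s t. s \<in> {a..b} \<Longrightarrow> t \<in> {-T..T} \<Longrightarrow>
      ((\<lambda>s. e (s, t)) has_vector_derivative e' (s, t)) (at s within {a..b})"
    and unit: "\<And>s. s \<in> {a..b} \<Longrightarrow> norm (e' (s, 0)) = 1"
  obtains d \<delta> where "d > 0" "\<delta> > 0" "\<delta> \<le> T"
    "\<And>t u v. \<bar>t\<bar> \<le> \<delta> \<Longrightarrow> u \<in> {a..b} \<Longrightarrow> v \<in> {a..b} \<Longrightarrow> u < v \<Longrightarrow> v < u + d \<Longrightarrow>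
      e (u, t) \<noteq> e (v, t)"
proof -
  have "continuous_on {a..b} (\<lambda>s. e' (s, 0))"
    by (rule continuous_on_slice[OF e']) (use \<open>T > 0\<close> in auto)
  then have "uniformly_continuous_on {a..b} (\<lambda>s. e' (s, 0))"
    by (rule compact_uniformly_continuous[OF _ compact_Icc])
  then have "\<exists>d>0. \<forall>u\<in>{a..b}. \<forall>v\<in>{a..b}. dist v u < d \<longrightarrow> dist (e' (v, 0)) (e' (u, 0)) < 1/8"
    unfolding uniformly_continuous_on_def by (erule_tac x="1/8" in allE) simp
  then obtain d where d: "d > 0"
    "\<And>u v. u \<in> {a..b} \<Longrightarrow> v \<in> {a..b} \<Longrightarrow> dist v u < d \<Longrightarrow> dist (e' (v, 0)) (e' (u, 0)) < 1/8"
    by blast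
  obtain \<delta> where \<delta>: "\<delta> > 0" "\<delta> \<le> T"
    "\<And>s t. s \<in> {a..b} \<Longrightarrow> \<bar>t\<bar> \<le> \<delta> \<Longrightarrow> dist (e' (s, t)) (e' (s, 0)) < 1/8"
    using continuous_on_slices_uniformly_close[OF e' \<open>T > 0\<close>, of "1/8"] by auto
  show ?thesis
  proof (rule that[OF d(1) \<delta>(1,2)])
    fix t u v assume t: "\<bar>t\<bar> \<le> \<delta>" and uv: "u \<in> {a..b}" "v \<in> {a..b}" "u < v" "v < u + d"
    show "e (u, t) \<noteq> e (v, t)"
    proof (rule has_vector_derivative_nearly_constant_imp_neq[OF \<open>u < v\<close>])
      show "((\<lambda>s. e (s, t)) has_vector_derivative e' (x, t)) (at x within {u..v})"
        if "x \<in> {u..v}" for x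
      proof (rule has_vector_derivative_within_subset[OF der])
        show "x \<in> {a..b}" "{u..v} \<subseteq> {a..b}" using that uv by auto
        show "t \<in> {-T..T}" using t \<delta>(2) by auto
      qed
      show "norm (e' (x, t) - e' (u, t)) \<le> 3/8" if "x \<in> {u..v}" for x
      proof -
        have x: "x \<in> {a..b}" using that uv by auto
        have "e' (x, t) - e' (u, t) =
            (e' (x, t) - e' (x, 0)) + (e' (x, 0) - e' (u, 0)) + (e' (u, 0) - e' (u, t))"
          by simp
        then have "norm (e' (x, t) - e' (u, t)) \<le>
            norm ((e' (x, t) - e' (x, 0)) + (e' (x, 0) - e' (u, 0))) + norm (e' (u, 0) - e' (u, t))"
          by (metis norm_triangle_ineq)
        also have "\<dots> \<le>
            dist (e' (x, t)) (e' (x, 0)) + dist (e' (x, 0)) (e' (u, 0)) + dist (e' (u, 0)) (e' (u, t))"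
          unfolding dist_norm using norm_triangle_ineq add_right_mono by blast
        also have "\<dots> \<le> 1/8 + 1/8 + 1/8"
          using \<delta>(3)[OF x t] \<delta>(3)[OF uv(1) t] d(2)[OF uv(1) x] that uv(4)
          by (intro add_mono less_imp_le) (auto simp: dist_real_def dist_commute)
        finally show ?thesis by simp
      qed
      have "1 \<le> norm (e' (u, t)) + dist (e' (u, t)) (e' (u, 0))"
        using unit[OF uv(1)] norm_triangle_sub[of "e' (u, 0)" "e' (u, t)"]
        by (simp add: dist_norm norm_minus_commute)
      then show "3/8 < norm (e' (u, t))"
        using \<delta>(3)[OF uv(1) t] by simp
    qed
  qed
qed

lemma inj_on_slices_persists:
  fixes e e' :: "real \<times> real \<Rightarrow> 'b::real_normed_vector"
  assumes "T > 0"
    and e: "continuous_on ({a..b} \<times> {-T..T}) e" and e': "continuous_on ({a..b} \<times> {-T..T}) e'"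
    and der: "\<And>s t. s \<in> {a..b} \<Longrightarrow> t \<in> {-T..T} \<Longrightarrow>
      ((\<lambda>s. e (s, t)) has_vector_derivative e' (s, t)) (at s within {a..b})"
    and inj: "inj_on (\<lambda>s. e (s, 0)) {a..b}"
    and unit: "\<And>s. s \<in> {a..b} \<Longrightarrow> norm (e' (s, 0)) = 1"
  obtains \<delta> where "\<delta> > 0" "\<delta> \<le> T" "\<And>t. \<bar>t\<bar> \<le> \<delta> \<Longrightarrow> inj_on (\<lambda>s. e (s, t)) {a..b}"
proof -
  obtain d \<delta>1 where near: "d > 0" "\<delta>1 > 0" "\<delta>1 \<le> T"
    "\<And>t u v. \<bar>t\<bar> \<le> \<delta>1 \<Longrightarrow> u \<in> {a..b} \<Longrightarrow> v \<in> {a..b} \<Longrightarrow> u < v \<Longrightarrow> v < u + d \<Longrightarrow>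
      e (u, t) \<noteq> e (v, t)"
    using slices_separated_near[OF \<open>T > 0\<close> e' der unit] by blast
  obtain \<delta>2 where far: "\<delta>2 > 0" "\<delta>2 \<le> T"
    "\<And>t u v. \<bar>t\<bar> \<le> \<delta>2 \<Longrightarrow> u \<in> {a..b} \<Longrightarrow> v \<in> {a..b} \<Longrightarrow> u + d \<le> v \<Longrightarrow> e (u, t) \<noteq> e (v, t)"
    using slices_separated_far[OF \<open>T > 0\<close> e inj near(1)] by blast
  show ?thesis
  proof (rule that[of "min \<delta>1 \<delta>2"])
    fix t assume t: "\<bar>t\<bar> \<le> min \<delta>1 \<delta>2"
    have separated: "e (u, t) \<noteq> e (v, t)" if "u \<in> {a..b}" "v \<in> {a..b}" "u < v" for u v
      using near(4)[of t u v] far(3)[of t u v] t that by (cases "u + d \<le> v") auto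
    show "inj_on (\<lambda>s. e (s, t)) {a..b}"
    proof (rule inj_onI)
      fix u v assume "u \<in> {a..b}" "v \<in> {a..b}" "e (u, t) = e (v, t)"
      then show "u = v"
        using separated[of u v] separated[of v u] by (cases u v rule: linorder_cases) auto
    qed
  qed (use near far in auto)
qed

section \<open>Smooth extensions and derivatives of curves\<close>

lemma Cinf_on_imp_Ck_on: "Cinf_on U f \<Longrightarrow> Ck_on n U f"
  by (simp add: Cinf_on_def)

lemma Cinf_on_Ds: "Cinf_on U f \<Longrightarrow> Cinf_on U (Ds f)"
  by (simp add: Cinf_on_def Ck_on_Ds)

lemma Cinf_on_Dt: "Cinf_on U f \<Longrightarrow> Cinf_on U (Dt f)"
  by (simp add: Cinf_on_def Ck_on_Dt)

lemma Cinf_on_has_vector_derivative_Ds: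
  "Cinf_on U f \<Longrightarrow> (s, t) \<in> U \<Longrightarrow> ((\<lambda>s. f (s, t)) has_vector_derivative Ds f (s, t)) (at s within S)"
  unfolding Cinf_on_def by (metis has_vector_derivative_Ds)

lemma Cinf_on_has_vector_derivative_Dt:
  "Cinf_on U f \<Longrightarrow> (s, t) \<in> U \<Longrightarrow> ((\<lambda>t. f (s, t)) has_vector_derivative Dt f (s, t)) (at t within S)"
  unfolding Cinf_on_def by (metis has_vector_derivative_Dt)

lemma smooth_on_set_box_neighbourhood:
  fixes a b c e :: real and f :: "real \<times> real \<Rightarrow> 'b::real_normed_vector"
  assumes "smooth_on_set ({a..b} \<times> {c..e}) f" "a \<le> b" "c \<le> e"
  obtains d g where "d > 0" "Cinf_on ({a - d<..<b + d} \<times> {c - d<..<e + d}) g"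
    "\<And>s t. s \<in> {a..b} \<Longrightarrow> t \<in> {c..e} \<Longrightarrow> g (s, t) = f (s, t)"
proof -
  obtain U g where U: "open U" "{a..b} \<times> {c..e} \<subseteq> U" "Cinf_on U g"
    and g: "\<forall>p\<in>{a..b} \<times> {c..e}. g p = f p"
    using assms(1) unfolding smooth_on_set_def by blast
  obtain \<epsilon> where "\<epsilon> > 0" and \<epsilon>: "(\<Union>p\<in>{a..b} \<times> {c..e}. ball p \<epsilon>) \<subseteq> U"
    using compact_subset_open_imp_ball_epsilon_subset[OF compact_Times[OF compact_Icc compact_Icc] U(1,2)]
    by blast
  define d where "d = \<epsilon> / 2"
  have box: "{a - d<..<b + d} \<times> {c - d<..<e + d} \<subseteq> U"
  proof
    fix p assume "p \<in> {a - d<..<b + d} \<times> {c - d<..<e + d}"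
    then obtain s t where p: "p = (s, t)" "s \<in> {a - d<..<b + d}" "t \<in> {c - d<..<e + d}"
      by blast
    define q where "q = (max a (min s b), max c (min t e))"
    have "q \<in> {a..b} \<times> {c..e}"
      using assms(2,3) by (auto simp: q_def)
    moreover have "dist q p \<le> dist (max a (min s b)) s + dist (max c (min t e)) t"
      using norm_Pair_le[of "max a (min s b) - s" "max c (min t e) - t"] by (simp add: q_def p dist_norm)
    moreover have "dist (max a (min s b)) s < d" "dist (max c (min t e)) t < d"
      using p(2,3) assms(2,3) \<open>\<epsilon> > 0\<close> by (auto simp: d_def dist_real_def max_def min_def)
    ultimately show "p \<in> U"
      using \<epsilon> by (force simp: d_def)
  qed
  show ?thesis
  proof (rule that)
    show "d > 0" using \<open>\<epsilon> > 0\<close> by (simp add: d_def)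
    show "Cinf_on ({a - d<..<b + d} \<times> {c - d<..<e + d}) g"
      using U(3) Ck_on_subset[OF _ box] by (auto simp: Cinf_on_def open_Times)
  qed (use g in auto)
qed

lemma d1_d2_eq_on_interval:
  fixes c e e' e'' :: "real \<Rightarrow> real \<times> real"
  assumes "L > 0" and ce: "\<And>s. s \<in> {0..2*L} \<Longrightarrow> c s = e s"
    and e': "\<And>s. s \<in> {0..2*L} \<Longrightarrow> (e has_vector_derivative e' s) (at s within {0..2*L})"
    and e'': "\<And>s. s \<in> {0..2*L} \<Longrightarrow> (e' has_vector_derivative e'' s) (at s within {0..2*L})"
    and s: "s \<in> {0..2*L}"
  shows "d1 L c s = e' s" "d2 L c s = e'' s"
proof -
  have L2: "0 < 2 * L" using \<open>L > 0\<close> by simp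
  have d1: "d1 L c x = e' x" if x: "x \<in> {0..2*L}" for x
  proof -
    have "(c has_vector_derivative e' x) (at x within {0..2*L})"
      by (rule has_vector_derivative_transform[OF x ce e'[OF x]])
    then show ?thesis
      unfolding d1_def by (rule vector_derivative_within_closed_interval[OF L2 x])
  qed
  then show "d1 L c s = e' s" using s .
  have "(d1 L c has_vector_derivative e'' s) (at s within {0..2*L})"
    by (rule has_vector_derivative_transform[OF s d1 e''[OF s]])
  then show "d2 L c s = e'' s"
    unfolding d2_def by (rule vector_derivative_within_closed_interval[OF L2 s])
qed

lemma inner_perp: "inner (a::real\<times>real) (perp b) = fst a * snd b - snd a * fst b"
  by (simp add: perp_def inner_prod_def)

lemma bounded_linear_perp: "bounded_linear perp"
  unfolding perp_def[abs_def]
  by (intro bounded_linear_Pair bounded_linear_snd bounded_linear_minus[OF bounded_linear_fst])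

section \<open>The area preserving correction\<close>

locale first_order_variation =
  fixes L x0 tV d :: real and \<gamma> :: "real \<Rightarrow> real \<times> real" and V G :: "real \<times> real \<Rightarrow> real \<times> real"
  assumes L_pos: "L > 0" and d_pos: "d > 0"
    and admissible: "admissible L x0 \<gamma>" and arclength: "arclength_param L \<gamma>"
    and variation: "admissible_variation L x0 \<gamma> V tV"
    and first_order: "first_order_area_preserving L \<gamma> V tV"
    and G_smooth: "Cinf_on ({-d<..<2*L+d} \<times> {-tV<..<tV}) G"
    and G_eq_V: "\<And>s t. s \<in> {0..2*L} \<Longrightarrow> t \<in> {-tV..tV} \<Longrightarrow> G (s, t) = V (s, t)"
begin

abbreviation "S0 \<equiv> {-d<..<2*L+d}"
abbreviation "T0 \<equiv> {-tV<..<tV}"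
abbreviation "Q0 \<equiv> S0 \<times> T0"

lemma tV_pos: "tV > 0"
  using variation by (simp add: admissible_variation_def)

lemma open_S0: "open S0"
  by simp

lemma open_Q0: "open Q0"
  by (simp add: open_Times)

lemma in_Q0: "s \<in> {0..2*L} \<Longrightarrow> t \<in> T0 \<Longrightarrow> (s, t) \<in> Q0"
  using d_pos by auto

lemma zero_in_T0: "0 \<in> T0"
  using tV_pos by simp

lemma Ds_G_smooth: "Cinf_on Q0 (Ds G)"
  and Dt_G_smooth: "Cinf_on Q0 (Dt G)"
  and Ds_Ds_G_smooth: "Cinf_on Q0 (Ds (Ds G))"
  using Cinf_on_Ds Cinf_on_Dt G_smooth by blast+

lemma V_slice_admissible: "t \<in> {-tV..tV} \<Longrightarrow> admissible L x0 (\<lambda>s. V (s, t))"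
  using variation by (simp add: admissible_variation_def)

lemma gamma_eq_G: "s \<in> {0..2*L} \<Longrightarrow> \<gamma> s = G (s, 0)"
  using variation G_eq_V[of s 0] tV_pos by (simp add: admissible_variation_def)

lemma d1_d2_gamma:
  assumes "s \<in> {0..2*L}"
  shows "d1 L \<gamma> s = Ds G (s, 0)" "d2 L \<gamma> s = Ds (Ds G) (s, 0)"
proof -
  have "x \<in> {0..2*L} \<Longrightarrow> (x, 0) \<in> Q0" for x
    using in_Q0 zero_in_T0 by blast
  note derivatives = Cinf_on_has_vector_derivative_Ds[OF G_smooth this]
    Cinf_on_has_vector_derivative_Ds[OF Ds_G_smooth this]
  show "d1 L \<gamma> s = Ds G (s, 0)" "d2 L \<gamma> s = Ds (Ds G) (s, 0)"
    by (rule d1_d2_eq_on_interval[OF L_pos gamma_eq_G derivatives assms], assumption+)+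
qed

lemma norm_Ds_G: "s \<in> {0..2*L} \<Longrightarrow> norm (Ds G (s, 0)) = 1"
  using arclength d1_d2_gamma(1) by (simp add: arclength_param_def)

lemma curvature_G_pos:
  assumes "s \<in> {0..2*L}"
  shows "inner (Ds G (s, 0)) (perp (Ds (Ds G) (s, 0))) > 0"
proof -
  have "curvature L \<gamma> s > 0" using admissible assms by (simp add: admissible_def)
  then show ?thesis using d1_d2_gamma[OF assms] norm_Ds_G[OF assms] by (simp add: curvature_def)
qed

lemma Dt_G_at_endpoint:
  assumes "s = 0 \<or> s = 2*L"
  shows "Dt G (s, 0) = 0"
proof -
  have s: "s \<in> {0..2*L}" using assms L_pos by auto
  have G_const: "G (s, t) = G (s, 0)" if "t \<in> T0" for t
  proof -
    have "V (s, t) = V (s, 0)"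
      using V_slice_admissible[of t] V_slice_admissible[of 0] that tV_pos assms
      by (auto simp: admissible_def)
    then show ?thesis
      using G_eq_V[OF s] that tV_pos by simp
  qed
  have "((\<lambda>t. G (s, t)) has_vector_derivative Dt G (s, 0)) (at 0)"
    by (rule Cinf_on_has_vector_derivative_Dt[OF G_smooth in_Q0[OF s zero_in_T0]])
  moreover have "((\<lambda>t. G (s, 0)) has_vector_derivative 0) (at 0)"
    by (rule has_vector_derivative_const)
  ultimately show ?thesis
    by (rule has_vector_derivative_eq_on_open[OF _ _ open_greaterThanLessThan zero_in_T0 G_const])
qed

lemma velocity_eq_Dt_G:
  assumes "s \<in> {0..2*L}"
  shows "velocity V tV s = Dt G (s, 0)"
proof -
  have "((\<lambda>t. G (s, t)) has_vector_derivative Dt G (s, 0)) (at 0 within {-tV..tV})"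
    by (rule Cinf_on_has_vector_derivative_Dt[OF G_smooth in_Q0[OF assms zero_in_T0]])
  then have "((\<lambda>t. V (s, t)) has_vector_derivative Dt G (s, 0)) (at 0 within {-tV..tV})"
    by (rule has_vector_derivative_transform[rotated 2]) (use tV_pos G_eq_V assms in auto)
  then show ?thesis
    unfolding velocity_def
    by (rule vector_derivative_within_closed_interval[rotated 2]) (use tV_pos in auto)
qed

lemma acceleration_eq_Dt_Dt_G:
  assumes "0 < t1" "t1 \<le> tV" and s: "s \<in> {0..2*L}"
  shows "acceleration V t1 s = Dt (Dt G) (s, 0)"
proof -
  define F where "F t = vector_derivative (\<lambda>\<tau>. V (s, \<tau>)) (at t within {-t1..t1})" for t
  have F_eq: "F t = Dt G (s, t)" if t: "t \<in> {-t1<..<t1}" for t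
  proof -
    have "((\<lambda>\<tau>. G (s, \<tau>)) has_vector_derivative Dt G (s, t)) (at t)"
      by (rule Cinf_on_has_vector_derivative_Dt[OF G_smooth in_Q0[OF s]]) (use t assms in auto)
    then have "((\<lambda>\<tau>. V (s, \<tau>)) has_vector_derivative Dt G (s, t)) (at t)"
      by (rule has_vector_derivative_transform_within_open[of _ _ _ "{-t1<..<t1}"])
        (use t assms G_eq_V in auto)
    moreover have "at t within {-t1..t1} = at t"
      by (rule at_within_interior) (use t in auto)
    ultimately show ?thesis unfolding F_def by (simp add: vector_derivative_at)
  qed
  have "((\<lambda>t. Dt G (s, t)) has_vector_derivative Dt (Dt G) (s, 0)) (at 0)"
    by (rule Cinf_on_has_vector_derivative_Dt[OF Dt_G_smooth in_Q0[OF s zero_in_T0]])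
  then have "(F has_vector_derivative Dt (Dt G) (s, 0)) (at 0)"
    by (rule has_vector_derivative_transform_within_open[of _ _ _ "{-t1<..<t1}"])
      (use assms F_eq in auto)
  then have "(F has_vector_derivative Dt (Dt G) (s, 0)) (at 0 within {-t1..t1})"
    by (rule has_vector_derivative_at_within)
  then have "vector_derivative F (at 0 within {-t1..t1}) = Dt (Dt G) (s, 0)"
    by (rule vector_derivative_within_closed_interval[rotated 2]) (use assms in auto)
  then show ?thesis unfolding acceleration_def F_def[abs_def] .
qed

definition "eta s = bump (L/2) (3*L/2) s * snd (Ds G (s, 0))"
definition "eta' s = vector_derivative eta (at s)"
definition "eta'' s = vector_derivative eta' (at s)"

lemma Ck_on_eta: "Ck_on n S0 eta"
proof -
  have "Ck_on n S0 (\<lambda>s. Ds G (s, 0))"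
    by (rule Ck_on_compose[OF open_S0 open_Q0 _ Cinf_on_imp_Ck_on[OF Ds_G_smooth]
          Ck_on_bounded_linear_map[OF open_S0]])
      (use zero_in_T0 in \<open>auto intro: bounded_linear_Pair bounded_linear_ident bounded_linear_zero\<close>)
  then have "Ck_on n S0 (\<lambda>s. snd (Ds G (s, 0)))"
    by (rule Ck_on_bounded_linear[OF open_S0 bounded_linear_snd])
  then show ?thesis
    unfolding eta_def[abs_def] by (rule Ck_on_mult[OF open_S0 Ck_on_subset[OF Ck_on_bump subset_UNIV]])
qed

lemma Ck_on_eta': "Ck_on n S0 eta'"
  unfolding eta'_def[abs_def] by (rule Ck_on_vector_derivative[OF open_S0 Ck_on_eta])

lemma Ck_on_eta'': "Ck_on n S0 eta''"
  unfolding eta''_def[abs_def] by (rule Ck_on_vector_derivative[OF open_S0 Ck_on_eta'])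

lemma eta_has_vector_derivative: "s \<in> S0 \<Longrightarrow> (eta has_vector_derivative eta' s) (at s within S)"
  unfolding eta'_def by (rule Ck_on_has_vector_derivative[OF open_S0 Ck_on_eta])

lemma eta'_has_vector_derivative: "s \<in> S0 \<Longrightarrow> (eta' has_vector_derivative eta'' s) (at s within S)"
  unfolding eta''_def by (rule Ck_on_has_vector_derivative[OF open_S0 Ck_on_eta'])

lemma eta_eq_0: "s \<le> L/2 \<or> s \<ge> 3*L/2 \<Longrightarrow> eta s = 0"
  by (simp add: eta_def bump_eq_0)

definition "area_density p = (fst (G p) * snd (Ds G p) - fst (Ds G p) * snd (G p)) / 2"
definition "gain_density p = eta (fst p) * snd (Ds G p)"
definition "slice_area t = integral {0..2*L} (\<lambda>s. area_density (s, t))"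
definition "area_gain t = integral {0..2*L} (\<lambda>s. gain_density (s, t))"

lemma Ck_on_fst_snd:
  assumes "Cinf_on Q0 f"
  shows "Ck_on n Q0 (\<lambda>p. fst (f p))" "Ck_on n Q0 (\<lambda>p. snd (f p))"
  using Ck_on_bounded_linear[OF open_Q0 bounded_linear_fst Cinf_on_imp_Ck_on[OF assms]]
    Ck_on_bounded_linear[OF open_Q0 bounded_linear_snd Cinf_on_imp_Ck_on[OF assms]]
  by auto

lemma Ck_on_area_density: "Ck_on n Q0 area_density"
  unfolding area_density_def[abs_def]
  by (intro Ck_on_bounded_linear[OF open_Q0 bounded_linear_divide] Ck_on_diff[OF open_Q0]
      Ck_on_mult[OF open_Q0] Ck_on_fst_snd G_smooth Ds_G_smooth)

lemma Ck_on_gain_density: "Ck_on n Q0 gain_density"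
proof -
  have "Ck_on n Q0 (\<lambda>p. eta (fst p))"
    by (rule Ck_on_compose[OF open_Q0 open_S0 _ Ck_on_eta
          Ck_on_bounded_linear_map[OF open_Q0 bounded_linear_fst]]) auto
  then show ?thesis
    unfolding gain_density_def[abs_def]
    by (rule Ck_on_mult[OF open_Q0 _ Ck_on_fst_snd(2)[OF Ds_G_smooth]])
qed

lemma Ck_on_slice_area: "Ck_on n T0 slice_area"
  unfolding slice_area_def[abs_def]
  by (rule Ck_on_parametric_integral[OF open_Q0 Ck_on_area_density _ convex_real_interval(8) in_Q0])
    simp

lemma Ck_on_area_gain: "Ck_on n T0 area_gain"
  unfolding area_gain_def[abs_def]
  by (rule Ck_on_parametric_integral[OF open_Q0 Ck_on_gain_density _ convex_real_interval(8) in_Q0])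
    simp

lemma slice_area_0: "slice_area 0 = area L \<gamma>"
  unfolding area_def slice_area_def area_density_def
  by (subst integral_cong[of _ _ "\<lambda>s. (fst (\<gamma> s) * snd (d1 L \<gamma> s) - fst (d1 L \<gamma> s) * snd (\<gamma> s)) / 2"])
    (simp_all add: gamma_eq_G d1_d2_gamma)

lemma tangent_not_horizontal_on_middle: "\<exists>s \<in> {L/2<..<3*L/2}. snd (Ds G (s, 0)) \<noteq> 0"
proof (rule ccontr)
  assume "\<not> ?thesis"
  then have horizontal: "\<And>s. s \<in> {L/2<..<3*L/2} \<Longrightarrow> snd (Ds G (s, 0)) = 0"
    by auto
  have L: "L \<in> {L/2<..<3*L/2}" "L \<in> {0..2*L}"
    using L_pos by auto
  have "((\<lambda>s. snd (Ds G (s, 0))) has_vector_derivative snd (Ds (Ds G) (L, 0))) (at L)"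
    by (rule bounded_linear.has_vector_derivative[OF bounded_linear_snd
          Cinf_on_has_vector_derivative_Ds[OF Ds_G_smooth in_Q0[OF L(2) zero_in_T0]]])
  then have "snd (Ds (Ds G) (L, 0)) = 0"
    by (rule has_vector_derivative_eq_on_open[OF _ has_vector_derivative_const
          open_greaterThanLessThan L(1) horizontal])
  then show False
    using curvature_G_pos[OF L(2)] horizontal[OF L(1)] by (simp add: inner_perp)
qed

lemma area_gain_0_pos: "area_gain 0 > 0"
proof -
  obtain s1 where s1: "s1 \<in> {L/2<..<3*L/2}" "snd (Ds G (s1, 0)) \<noteq> 0"
    using tangent_not_horizontal_on_middle by blast
  have density: "gain_density (s, 0) = bump (L/2) (3*L/2) s * (snd (Ds G (s, 0)))\<^sup>2" for s
    by (simp add: gain_density_def eta_def power2_eq_square)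
  have cont: "continuous_on {0..2*L} (\<lambda>s. gain_density (s, 0))"
    by (rule continuous_on_slice[OF Ck_on_continuous_on[OF Ck_on_gain_density]])
      (use in_Q0 zero_in_T0 in blast)
  have nonneg: "gain_density (s, 0) \<ge> 0" for s
    unfolding density by (intro mult_nonneg_nonneg bump_nonneg) simp
  have "gain_density (s1, 0) > 0"
    unfolding density using s1 by (intro mult_pos_pos bump_pos) auto
  moreover have "s1 \<in> {0..2*L}"
    using s1 L_pos by auto
  ultimately have "integral {0..2*L} (\<lambda>s. gain_density (s, 0)) \<noteq> 0"
    using integral_eq_0_iff[OF cont] L_pos nonneg by fastforce
  moreover have "integral {0..2*L} (\<lambda>s. gain_density (s, 0)) \<ge> 0"
    by (rule integral_nonneg[OF integrable_continuous_interval[OF cont]]) (rule nonneg)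
  ultimately show ?thesis by (simp add: area_gain_def)
qed

lemma Dt_area_density:
  assumes "(s, t) \<in> Q0"
  shows "Dt area_density (s, t) =
    (fst (G (s, t)) * snd (Dt (Ds G) (s, t)) + fst (Dt G (s, t)) * snd (Ds G (s, t))
      - fst (Ds G (s, t)) * snd (Dt G (s, t)) - fst (Dt (Ds G) (s, t)) * snd (G (s, t))) / 2"
proof -
  note G_t = Cinf_on_has_vector_derivative_Dt[OF G_smooth assms]
    and Ds_G_t = Cinf_on_has_vector_derivative_Dt[OF Ds_G_smooth assms]
  have "((\<lambda>t. fst (G (s, t)) * snd (Ds G (s, t))) has_vector_derivative
      fst (G (s, t)) * snd (Dt (Ds G) (s, t)) + fst (Dt G (s, t)) * snd (Ds G (s, t))) (at t)"
    by (rule has_vector_derivative_mult[OF bounded_linear.has_vector_derivative[OF bounded_linear_fst G_t]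
          bounded_linear.has_vector_derivative[OF bounded_linear_snd Ds_G_t]])
  moreover have "((\<lambda>t. fst (Ds G (s, t)) * snd (G (s, t))) has_vector_derivative
      fst (Ds G (s, t)) * snd (Dt G (s, t)) + fst (Dt (Ds G) (s, t)) * snd (G (s, t))) (at t)"
    by (rule has_vector_derivative_mult[OF bounded_linear.has_vector_derivative[OF bounded_linear_fst Ds_G_t]
          bounded_linear.has_vector_derivative[OF bounded_linear_snd G_t]])
  ultimately have "((\<lambda>t. area_density (s, t)) has_vector_derivative
      (fst (G (s, t)) * snd (Dt (Ds G) (s, t)) + fst (Dt G (s, t)) * snd (Ds G (s, t))
      - fst (Ds G (s, t)) * snd (Dt G (s, t)) - fst (Dt (Ds G) (s, t)) * snd (G (s, t))) / 2) (at t)"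
    unfolding area_density_def
    using bounded_linear.has_vector_derivative[OF bounded_linear_divide has_vector_derivative_diff]
    by (simp add: diff_diff_eq)
  then show ?thesis
    using vector_derivative_unique_at[OF has_vector_derivative_Dt[OF open_Q0 Ck_on_area_density assms]]
    by blast
qed

definition "cross_velocity s = fst (G (s, 0)) * snd (Dt G (s, 0)) - fst (Dt G (s, 0)) * snd (G (s, 0))"

definition "cross_velocity' s =
  fst (G (s, 0)) * snd (Ds (Dt G) (s, 0)) + fst (Ds G (s, 0)) * snd (Dt G (s, 0))
    - fst (Dt G (s, 0)) * snd (Ds G (s, 0)) - fst (Ds (Dt G) (s, 0)) * snd (G (s, 0))"

lemma cross_velocity'_has_integral: "(cross_velocity' has_integral 0) {0..2*L}"
proof -
  have "(cross_velocity has_vector_derivative cross_velocity' s) (at s within {0..2*L})"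
    if "s \<in> {0..2*L}" for s
  proof -
    have "(s, 0) \<in> Q0" using in_Q0[OF that zero_in_T0] .
    note G_s = Cinf_on_has_vector_derivative_Ds[OF G_smooth this]
      and Dt_G_s = Cinf_on_has_vector_derivative_Ds[OF Dt_G_smooth this]
    show ?thesis
      unfolding cross_velocity_def[abs_def] cross_velocity'_def diff_diff_eq
      by (intro has_vector_derivative_diff has_vector_derivative_mult
          bounded_linear.has_vector_derivative[OF bounded_linear_fst]
          bounded_linear.has_vector_derivative[OF bounded_linear_snd] G_s Dt_G_s)
  qed
  moreover have "cross_velocity 0 = 0" "cross_velocity (2*L) = 0"
    by (simp_all add: cross_velocity_def Dt_G_at_endpoint)
  ultimately show ?thesis
    using fundamental_theorem_of_calculus[of 0 "2*L" cross_velocity cross_velocity'] L_pos by simp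
qed

lemma Dt_area_density_at_0:
  assumes "s \<in> {0..2*L}"
  shows "Dt area_density (s, 0) = inner (velocity V tV s) (normal L \<gamma> s) + cross_velocity' s / 2"
proof -
  have "(s, 0) \<in> Q0" using in_Q0[OF assms zero_in_T0] .
  from Dt_area_density[OF this] Ds_Dt_commute[OF open_Q0 Cinf_on_imp_Ck_on[OF G_smooth] this]
  have "Dt area_density (s, 0) =
      fst (Dt G (s, 0)) * snd (Ds G (s, 0)) - fst (Ds G (s, 0)) * snd (Dt G (s, 0))
      + cross_velocity' s / 2"
    by (simp add: cross_velocity'_def field_simps)
  also have "fst (Dt G (s, 0)) * snd (Ds G (s, 0)) - fst (Ds G (s, 0)) * snd (Dt G (s, 0)) =
      inner (velocity V tV s) (normal L \<gamma> s)"
    using norm_Ds_G[OF assms]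
    by (simp add: velocity_eq_Dt_G[OF assms] normal_def d1_d2_gamma[OF assms] inner_perp)
  finally show ?thesis .
qed

lemma slice_area_has_derivative:
  "(slice_area has_real_derivative integral {0..2*L} (\<lambda>s. inner (velocity V tV s) (normal L \<gamma> s))) (at 0)"
proof -
  have "continuous_on {0..2*L} (\<lambda>s. Dt area_density (s, 0))"
    by (rule continuous_on_slice[OF Ck_on_continuous_on[OF Ck_on_Dt[OF Ck_on_area_density]]])
      (rule in_Q0[OF _ zero_in_T0])
  then have "((\<lambda>s. Dt area_density (s, 0)) has_integral
      integral {0..2*L} (\<lambda>s. Dt area_density (s, 0))) {0..2*L}"
    by (rule integrable_integral[OF integrable_continuous_interval])
  from has_integral_diff[OF this has_integral_divide[OF cross_velocity'_has_integral, of 2]]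
  have "((\<lambda>s. Dt area_density (s, 0) - cross_velocity' s / 2) has_integral
      integral {0..2*L} (\<lambda>s. Dt area_density (s, 0))) {0..2*L}"
    by simp
  then have "((\<lambda>s. inner (velocity V tV s) (normal L \<gamma> s)) has_integral
      integral {0..2*L} (\<lambda>s. Dt area_density (s, 0))) {0..2*L}"
    by (rule has_integral_eq[rotated]) (simp add: Dt_area_density_at_0)
  moreover have "(slice_area has_vector_derivative integral {0..2*L} (\<lambda>s. Dt area_density (s, 0)))
      (at 0 within T0)"
    unfolding slice_area_def[abs_def]
    by (rule has_vector_derivative_parametric_integral[OF open_Q0 Ck_on_area_density
          convex_real_interval(8) in_Q0 zero_in_T0])
  ultimately show ?thesis
    by (simp add: integral_unique at_within_open[OF zero_in_T0]
        has_real_derivative_iff_has_vector_derivative)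
qed

lemma slice_area_has_derivative_0: "(slice_area has_real_derivative 0) (at 0)"
  using slice_area_has_derivative first_order by (simp add: first_order_area_preserving_def)

definition "correction t = (area L \<gamma> - slice_area t) / area_gain t"

abbreviation "T1 \<equiv> T0 \<inter> area_gain -` (-{0})"
abbreviation "Q1 \<equiv> S0 \<times> T1"

definition "WG p = G p + (correction (snd p) * eta (fst p), 0)"
definition "WG_s p = Ds G p + (correction (snd p) * eta' (fst p), 0)"
definition "WG_ss p = Ds (Ds G) p + (correction (snd p) * eta'' (fst p), 0)"

lemma correction_0: "correction 0 = 0"
  by (simp add: correction_def slice_area_0)

lemma correction_has_derivative_0: "(correction has_real_derivative 0) (at 0)"
proof -
  have "(area_gain has_real_derivative vector_derivative area_gain (at 0)) (at 0)"
    using Ck_on_has_vector_derivative[OF open_greaterThanLessThan Ck_on_area_gain zero_in_T0]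
    by (simp add: has_real_derivative_iff_has_vector_derivative)
  moreover have "((\<lambda>t. area L \<gamma> - slice_area t) has_real_derivative 0 - 0) (at 0)"
    by (rule DERIV_diff[OF DERIV_const slice_area_has_derivative_0])
  ultimately show ?thesis
    using DERIV_divide[of "\<lambda>t. area L \<gamma> - slice_area t"] area_gain_0_pos
    by (fastforce simp: correction_def[abs_def] slice_area_0)
qed

lemma open_T1: "open T1"
  by (rule continuous_open_preimage[OF Ck_on_continuous_on[OF Ck_on_area_gain]]) auto

lemma open_Q1: "open Q1"
  using open_T1 by (simp add: open_Times)

lemma zero_in_T1: "0 \<in> T1"
  using zero_in_T0 area_gain_0_pos by simp

lemma Ck_on_correction: "Ck_on n T1 correction"
proof -
  have "Ck_on n T1 (\<lambda>t. area L \<gamma> - slice_area t)"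
    by (rule Ck_on_diff[OF open_T1 Ck_on_const Ck_on_subset[OF Ck_on_slice_area]]) auto
  moreover have "Ck_on n T1 (\<lambda>t. inverse (area_gain t))"
    by (rule Ck_on_inverse[OF open_T1 Ck_on_subset[OF Ck_on_area_gain]]) auto
  ultimately have "Ck_on n T1 (\<lambda>t. (area L \<gamma> - slice_area t) * inverse (area_gain t))"
    by (rule Ck_on_mult[OF open_T1])
  then show ?thesis
    unfolding correction_def[abs_def] by (simp add: divide_inverse)
qed

lemma Ck_on_corrected:
  fixes F :: "real \<times> real \<Rightarrow> real \<times> real"
  assumes "Ck_on n Q1 F" "Ck_on n S0 k"
  shows "Ck_on n Q1 (\<lambda>p. F p + (correction (snd p) * k (fst p), 0))"
proof -
  have "Ck_on n Q1 (\<lambda>p. correction (snd p))"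
    by (rule Ck_on_compose[OF open_Q1 open_T1 _ Ck_on_correction
          Ck_on_bounded_linear_map[OF open_Q1 bounded_linear_snd]]) auto
  moreover have "Ck_on n Q1 (\<lambda>p. k (fst p))"
    by (rule Ck_on_compose[OF open_Q1 open_S0 _ assms(2)
          Ck_on_bounded_linear_map[OF open_Q1 bounded_linear_fst]]) auto
  ultimately have "Ck_on n Q1 (\<lambda>p. correction (snd p) * k (fst p))"
    by (rule Ck_on_mult[OF open_Q1])
  then have "Ck_on n Q1 (\<lambda>p. (correction (snd p) * k (fst p), 0::real))"
    by (rule Ck_on_bounded_linear[where l="\<lambda>x. (x, 0::real)", OF open_Q1
          bounded_linear_Pair[OF bounded_linear_ident bounded_linear_zero]])
  then show ?thesis
    by (rule Ck_on_add[OF open_Q1 assms(1)])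
qed

lemma Q1_subset_Q0: "Q1 \<subseteq> Q0"
  by auto

lemma Ck_on_WG: "Ck_on n Q1 WG"
  unfolding WG_def[abs_def]
  by (rule Ck_on_corrected[OF Ck_on_subset[OF Cinf_on_imp_Ck_on[OF G_smooth] Q1_subset_Q0] Ck_on_eta])

lemma Ck_on_WG_s: "Ck_on n Q1 WG_s"
  unfolding WG_s_def[abs_def]
  by (rule Ck_on_corrected[OF Ck_on_subset[OF Cinf_on_imp_Ck_on[OF Ds_G_smooth] Q1_subset_Q0]
        Ck_on_eta'])

lemma Ck_on_WG_ss: "Ck_on n Q1 WG_ss"
  unfolding WG_ss_def[abs_def]
  by (rule Ck_on_corrected[OF Ck_on_subset[OF Cinf_on_imp_Ck_on[OF Ds_Ds_G_smooth] Q1_subset_Q0]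
        Ck_on_eta''])

lemma WG_has_vector_derivative:
  assumes "(s, t) \<in> Q1"
  shows "((\<lambda>s. WG (s, t)) has_vector_derivative WG_s (s, t)) (at s within S)"
    and "((\<lambda>s. WG_s (s, t)) has_vector_derivative WG_ss (s, t)) (at s within S)"
proof -
  have s: "s \<in> S0" and st: "(s, t) \<in> Q0" using assms by auto
  have "((\<lambda>s. (correction t * eta s, 0::real)) has_vector_derivative (correction t * eta' s, 0))
      (at s within S)"
    by (intro has_vector_derivative_Pair bounded_linear.has_vector_derivative[OF
          bounded_linear_mult_right eta_has_vector_derivative[OF s]] has_vector_derivative_const)
  from has_vector_derivative_add[OF Cinf_on_has_vector_derivative_Ds[OF G_smooth st] this]
  show "((\<lambda>s. WG (s, t)) has_vector_derivative WG_s (s, t)) (at s within S)"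
    by (simp add: WG_def WG_s_def)
  have "((\<lambda>s. (correction t * eta' s, 0::real)) has_vector_derivative (correction t * eta'' s, 0))
      (at s within S)"
    by (intro has_vector_derivative_Pair bounded_linear.has_vector_derivative[OF
          bounded_linear_mult_right eta'_has_vector_derivative[OF s]] has_vector_derivative_const)
  from has_vector_derivative_add[OF Cinf_on_has_vector_derivative_Ds[OF Ds_G_smooth st] this]
  show "((\<lambda>s. WG_s (s, t)) has_vector_derivative WG_ss (s, t)) (at s within S)"
    by (simp add: WG_s_def WG_ss_def)
qed

lemma WG_at_0: "WG (s, 0) = G (s, 0)" "WG_s (s, 0) = Ds G (s, 0)" "WG_ss (s, 0) = Ds (Ds G) (s, 0)"
  by (simp_all add: WG_def WG_s_def WG_ss_def correction_0 zero_prod_def)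

lemma interval_in_T1:
  obtains T where "T > 0" "T < tV" "{-T..T} \<subseteq> T1"
proof -
  obtain e where "e > 0" and e: "ball 0 e \<subseteq> T1"
    using open_contains_ball[of T1] open_T1 zero_in_T1 by blast
  have T: "{-(e/2)..e/2} \<subseteq> T1"
    using e \<open>e > 0\<close> by force
  moreover have "e/2 \<in> {-(e/2)..e/2}" using \<open>e > 0\<close> by simp
  ultimately have "e/2 \<in> T0" by blast
  then show ?thesis
    using that[of "e/2"] T \<open>e > 0\<close> by simp
qed

lemma small_time_interval:
  obtains tW where "0 < tW" "tW < tV" "{-tW..tW} \<subseteq> T1"
    "\<And>s t. s \<in> {0..2*L} \<Longrightarrow> \<bar>t\<bar> \<le> tW \<Longrightarrow> inner (WG_s (s, t)) (perp (WG_ss (s, t))) > 0"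
    "\<And>t. \<bar>t\<bar> \<le> tW \<Longrightarrow> inj_on (\<lambda>s. WG (s, t)) {0..2*L}"
proof -
  obtain T where "T > 0" "T < tV" and T: "{-T..T} \<subseteq> T1"
    by (rule interval_in_T1)
  have rectangle: "{0..2*L} \<times> {-T..T} \<subseteq> Q1"
    using T d_pos by auto
  have "continuous_on ({0..2*L} \<times> {-T..T}) (\<lambda>p. inner (WG_s p) (perp (WG_ss p)))"
    by (rule continuous_on_subset[OF continuous_on_inner[OF Ck_on_continuous_on[OF Ck_on_WG_s]
          bounded_linear.continuous_on[OF bounded_linear_perp Ck_on_continuous_on[OF Ck_on_WG_ss]]]
          rectangle])
  moreover have "0 \<le> 2*L" using L_pos by simp
  moreover have "\<And>s. s \<in> {0..2*L} \<Longrightarrow> inner (WG_s (s, 0)) (perp (WG_ss (s, 0))) > 0"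
    by (simp add: WG_at_0 curvature_G_pos)
  ultimately obtain \<delta>1 where \<delta>1: "\<delta>1 > 0" "\<delta>1 \<le> T"
    "\<And>s t. s \<in> {0..2*L} \<Longrightarrow> \<bar>t\<bar> \<le> \<delta>1 \<Longrightarrow> inner (WG_s (s, t)) (perp (WG_ss (s, t))) > 0"
    using continuous_on_pos_near_slice[OF _ \<open>T > 0\<close>] by blast
  have "inj_on (\<lambda>s. WG (s, 0)) {0..2*L}"
    using admissible inj_on_cong[of "{0..2*L}" \<gamma> "\<lambda>s. WG (s, 0)"]
    by (simp add: admissible_def WG_at_0 gamma_eq_G)
  moreover have "((\<lambda>s. WG (s, t)) has_vector_derivative WG_s (s, t)) (at s within {0..2*L})"
    if "s \<in> {0..2*L}" "t \<in> {-T..T}" for s t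
    using WG_has_vector_derivative(1) rectangle that by blast
  moreover have "norm (WG_s (s, 0)) = 1" if "s \<in> {0..2*L}" for s
    using that by (simp add: WG_at_0 norm_Ds_G)
  ultimately obtain \<delta>2 where \<delta>2: "\<delta>2 > 0" "\<delta>2 \<le> T"
    "\<And>t. \<bar>t\<bar> \<le> \<delta>2 \<Longrightarrow> inj_on (\<lambda>s. WG (s, t)) {0..2*L}"
    using inj_on_slices_persists[OF \<open>T > 0\<close> continuous_on_subset[OF Ck_on_continuous_on[OF Ck_on_WG]
          rectangle] continuous_on_subset[OF Ck_on_continuous_on[OF Ck_on_WG_s] rectangle]]
    by blast
  show ?thesis
  proof (rule that[of "min \<delta>1 \<delta>2"])
    have "{- min \<delta>1 \<delta>2..min \<delta>1 \<delta>2} \<subseteq> {-T..T}"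
      using \<delta>1(2) by auto
    then show "{- min \<delta>1 \<delta>2..min \<delta>1 \<delta>2} \<subseteq> T1"
      using T by (rule subset_trans)
  qed (use \<delta>1 \<delta>2 \<open>T < tV\<close> in auto)
qed

definition "W p = V p + (correction (snd p) * eta (fst p), 0)"

lemma W_eq_V_outside:
  "s \<in> {0..L/2} \<union> {3*L/2..2*L} \<Longrightarrow> W (s, t) = V (s, t)"
  by (auto simp: W_def eta_eq_0 zero_prod_def)

lemma density_has_integral:
  fixes f :: "real \<times> real \<Rightarrow> real"
  assumes "Ck_on 0 Q0 f" "t \<in> T0"
  shows "((\<lambda>s. f (s, t)) has_integral integral {0..2*L} (\<lambda>s. f (s, t))) {0..2*L}"
proof -
  have "continuous_on {0..2*L} (\<lambda>s. f (s, t))"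
    by (rule continuous_on_slice[OF Ck_on_continuous_on[OF assms(1)]]) (use in_Q0 assms(2) in blast)
  then show ?thesis
    by (rule integrable_integral[OF integrable_continuous_interval])
qed

context
  fixes tW :: real
  assumes tW: "0 < tW" "tW < tV" "{-tW..tW} \<subseteq> T1"
    and WG_curvature: "\<And>s t. s \<in> {0..2*L} \<Longrightarrow> \<bar>t\<bar> \<le> tW \<Longrightarrow> inner (WG_s (s, t)) (perp (WG_ss (s, t))) > 0"
    and WG_inj: "\<And>t. \<bar>t\<bar> \<le> tW \<Longrightarrow> inj_on (\<lambda>s. WG (s, t)) {0..2*L}"
begin

lemma in_T1: "\<bar>t\<bar> \<le> tW \<Longrightarrow> t \<in> T1"
  using subsetD[OF tW(3), of t] by (simp add: abs_le_iff)

lemma in_Q1: "s \<in> {0..2*L} \<Longrightarrow> \<bar>t\<bar> \<le> tW \<Longrightarrow> (s, t) \<in> Q1"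
  using in_T1 d_pos by auto

lemma W_eq_WG: "s \<in> {0..2*L} \<Longrightarrow> \<bar>t\<bar> \<le> tW \<Longrightarrow> W (s, t) = WG (s, t)"
  using G_eq_V[of s t] tW(2) by (auto simp: W_def WG_def abs_le_iff)

lemma d1_d2_W:
  assumes "\<bar>t\<bar> \<le> tW" "s \<in> {0..2*L}"
  shows "d1 L (\<lambda>s. W (s, t)) s = WG_s (s, t)" "d2 L (\<lambda>s. W (s, t)) s = WG_ss (s, t)"
  using d1_d2_eq_on_interval[OF L_pos, of "\<lambda>s. W (s, t)" "\<lambda>s. WG (s, t)" "\<lambda>s. WG_s (s, t)"
      "\<lambda>s. WG_ss (s, t)"] W_eq_WG WG_has_vector_derivative in_Q1 assms
  by auto

lemma W_slice_admissible:
  assumes t: "\<bar>t\<bar> \<le> tW"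
  shows "admissible L x0 (\<lambda>s. W (s, t))"
proof -
  have "smooth_on_set {0..2*L} (\<lambda>s. W (s, t))"
    unfolding smooth_on_set_def
  proof (intro exI conjI)
    show "Cinf_on S0 (\<lambda>s. WG (s, t))"
      unfolding Cinf_on_def
    proof (intro conjI allI open_S0)
      fix n
      have "Ck_on n S0 (\<lambda>s. (s, 0::real) + (0, t))"
        by (rule Ck_on_add[OF open_S0 Ck_on_bounded_linear_map[OF open_S0] Ck_on_const])
          (intro bounded_linear_Pair bounded_linear_ident bounded_linear_zero)
      then have "Ck_on n S0 (\<lambda>s. (s, t))"
        by simp
      with in_T1[OF t] show "Ck_on n S0 (\<lambda>s. WG (s, t))"
        using Ck_on_compose[OF open_S0 open_Q1 _ Ck_on_WG, of "\<lambda>s. (s, t)"] by auto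
    qed
  qed (use W_eq_WG t d_pos in auto)
  moreover have "d1 L (\<lambda>s. W (s, t)) s \<noteq> 0" and "curvature L (\<lambda>s. W (s, t)) s > 0"
    if "s \<in> {0..2*L}" for s
  proof -
    have "WG_s (s, t) \<noteq> 0"
      using WG_curvature[OF that t] by auto
    then show "d1 L (\<lambda>s. W (s, t)) s \<noteq> 0" "curvature L (\<lambda>s. W (s, t)) s > 0"
      using WG_curvature[OF that t] by (simp_all add: curvature_def d1_d2_W[OF t that])
  qed
  moreover have "inj_on (\<lambda>s. W (s, t)) {0..2*L}"
    using WG_inj[OF t] inj_on_cong[of "{0..2*L}" "\<lambda>s. W (s, t)" "\<lambda>s. WG (s, t)"] W_eq_WG t by simp
  moreover have "admissible L x0 (\<lambda>s. V (s, t))"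
    using V_slice_admissible t tW(2) by (simp add: abs_le_iff)
  ultimately show ?thesis
    using L_pos by (simp add: admissible_def W_def eta_eq_0)
qed

lemma rectangle_subset_Q1: "{0..2*L} \<times> {-tW..tW} \<subseteq> Q1"
proof
  fix p assume "p \<in> {0..2*L} \<times> {-tW..tW}"
  then obtain s t where "p = (s, t)" "s \<in> {0..2*L}" "\<bar>t\<bar> \<le> tW"
    by (auto simp: abs_le_iff)
  then show "p \<in> Q1"
    using in_Q1 by blast
qed

lemma W_admissible_variation: "admissible_variation L x0 \<gamma> W tW"
  unfolding admissible_variation_def
proof (intro conjI ballI)
  show "smooth_on_set ({0..2*L} \<times> {-tW..tW}) W"
    unfolding smooth_on_set_def
  proof (intro exI conjI)
    show "Cinf_on Q1 WG"
      using open_Q1 Ck_on_WG by (simp add: Cinf_on_def)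
  qed (use open_Q1 rectangle_subset_Q1 W_eq_WG in \<open>auto simp: abs_le_iff\<close>)
  show "W (s, 0) = \<gamma> s" if "s \<in> {0..2*L}" for s
    using that W_eq_WG[of s 0] tW(1) by (simp add: WG_at_0 gamma_eq_G)
qed (use tW W_slice_admissible in auto)

text \<open>Only the horizontal component is corrected, so the area changes by the correction times
  the integral of eta dy; the derivative of eta y integrates to zero.\<close>
lemma area_W_slice:
  assumes t: "\<bar>t\<bar> \<le> tW"
  shows "area L (\<lambda>s. W (s, t)) = slice_area t + correction t * area_gain t"
proof -
  have "t \<in> T0" using t tW(2) by auto
  define P where "P s = eta s * snd (G (s, t))" for s
  define P' where "P' s = eta s * snd (Ds G (s, t)) + eta' s * snd (G (s, t))" for s
  have "(P has_vector_derivative P' s) (at s within {0..2*L})" if "s \<in> {0..2*L}" for s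
    unfolding P_def[abs_def] P'_def
    using that \<open>t \<in> T0\<close> d_pos
    by (intro has_vector_derivative_mult eta_has_vector_derivative bounded_linear.has_vector_derivative[OF
          bounded_linear_snd] Cinf_on_has_vector_derivative_Ds[OF G_smooth]) auto
  then have "(P' has_integral 0) {0..2*L}"
    using fundamental_theorem_of_calculus[of 0 "2*L" P P'] L_pos by (simp add: P_def eta_eq_0)
  from has_integral_diff[OF has_integral_add[OF
        has_integral_mult_right[OF density_has_integral[OF Ck_on_area_density \<open>t \<in> T0\<close>], of 2]
        has_integral_mult_right[OF density_has_integral[OF Ck_on_gain_density \<open>t \<in> T0\<close>],
          of "2 * correction t"]]
      has_integral_mult_right[OF this, of "correction t"]]
  have "((\<lambda>s. 2 * area_density (s, t) + 2 * correction t * gain_density (s, t) - correction t * P' s)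
      has_integral 2 * slice_area t + 2 * correction t * area_gain t) {0..2*L}"
    by (simp add: slice_area_def area_gain_def)
  moreover have "2 * area_density (s, t) + 2 * correction t * gain_density (s, t) - correction t * P' s
      = fst (W (s, t)) * snd (d1 L (\<lambda>s. W (s, t)) s) - fst (d1 L (\<lambda>s. W (s, t)) s) * snd (W (s, t))"
    if "s \<in> {0..2*L}" for s
    unfolding d1_d2_W(1)[OF t that] W_eq_WG[OF that t]
    by (simp add: WG_def WG_s_def area_density_def gain_density_def P'_def algebra_simps;
        simp add: field_simps)
  ultimately have "((\<lambda>s. fst (W (s, t)) * snd (d1 L (\<lambda>s. W (s, t)) s)
      - fst (d1 L (\<lambda>s. W (s, t)) s) * snd (W (s, t)))
      has_integral 2 * slice_area t + 2 * correction t * area_gain t) {0..2*L}"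
    by (rule has_integral_eq[rotated])
  then show ?thesis
    unfolding area_def by (simp add: integral_unique)
qed

lemma W_area_preserving: "area_preserving L \<gamma> W tW"
  unfolding area_preserving_def
proof
  fix t assume "t \<in> {-tW..tW}"
  then have t: "\<bar>t\<bar> \<le> tW" "area_gain t \<noteq> 0"
    using in_T1 by (auto simp: abs_le_iff)
  show "area L (\<lambda>s. W (s, t)) = area L \<gamma>"
    using area_W_slice[OF t(1)] t(2) by (simp add: correction_def)
qed

lemma W_velocity:
  assumes s: "s \<in> {0..2*L}"
  shows "velocity W tW s = velocity V tV s"
proof -
  have "((\<lambda>\<tau>. (correction \<tau> * eta s, 0::real)) has_vector_derivative (0 * eta s, 0)) (at 0)"
    by (intro has_vector_derivative_Pair bounded_linear.has_vector_derivative[OF bounded_linear_mult_left]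
        has_vector_derivative_const)
      (use correction_has_derivative_0 in \<open>simp add: has_real_derivative_iff_has_vector_derivative\<close>)
  from has_vector_derivative_add[OF Cinf_on_has_vector_derivative_Dt[OF G_smooth in_Q0[OF s zero_in_T0]]
      this]
  have "((\<lambda>\<tau>. G (s, \<tau>) + (correction \<tau> * eta s, 0)) has_vector_derivative Dt G (s, 0))
      (at 0 within {-tW..tW})"
    by (simp add: zero_prod_def[symmetric] has_vector_derivative_at_within)
  then have "((\<lambda>\<tau>. W (s, \<tau>)) has_vector_derivative Dt G (s, 0)) (at 0 within {-tW..tW})"
  proof (rule has_vector_derivative_transform[rotated 2])
    show "W (s, \<tau>) = G (s, \<tau>) + (correction \<tau> * eta s, 0)" if "\<tau> \<in> {-tW..tW}" for \<tau>
      using W_eq_WG[OF s, of \<tau>] that by (simp add: WG_def abs_le_iff)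
  qed (use tW in simp)
  then have "velocity W tW s = Dt G (s, 0)"
    unfolding velocity_def
    by (rule vector_derivative_within_closed_interval[rotated 2]) (use tW in auto)
  then show ?thesis
    using velocity_eq_Dt_G[OF s] by simp
qed

lemma W_acceleration:
  assumes s: "s \<in> {0..L/2} \<union> {3*L/2..2*L}"
  shows "acceleration W tW s = acceleration V tV s"
proof -
  have "s \<in> {0..2*L}" using s L_pos by auto
  have "acceleration W tW s = acceleration V tW s"
    using W_eq_V_outside[OF s] by (simp add: acceleration_def)
  also have "\<dots> = Dt (Dt G) (s, 0)"
    using acceleration_eq_Dt_Dt_G[OF tW(1) _ \<open>s \<in> {0..2*L}\<close>] tW(2) by simp
  also have "\<dots> = acceleration V tV s"
    using acceleration_eq_Dt_Dt_G[OF tV_pos _ \<open>s \<in> {0..2*L}\<close>] by simp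
  finally show ?thesis .
qed

end

lemma exists_area_preserving_variation:
  "\<exists>W tW. admissible_variation L x0 \<gamma> W tW \<and> area_preserving L \<gamma> W tW \<and>
    (\<forall>s\<in>{0..2*L}. velocity W tW s = velocity V tV s) \<and>
    (\<forall>s\<in>{0..L/2} \<union> {3*L/2..2*L}. acceleration W tW s = acceleration V tV s)"
proof -
  obtain tW where tW: "0 < tW" "tW < tV" "{-tW..tW} \<subseteq> T1"
    "\<And>s t. s \<in> {0..2*L} \<Longrightarrow> \<bar>t\<bar> \<le> tW \<Longrightarrow> inner (WG_s (s, t)) (perp (WG_ss (s, t))) > 0"
    "\<And>t. \<bar>t\<bar> \<le> tW \<Longrightarrow> inj_on (\<lambda>s. WG (s, t)) {0..2*L}"
    using small_time_interval by blast
  then show ?thesis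
    using W_admissible_variation[OF tW] W_area_preserving[OF tW] W_velocity[OF tW]
      W_acceleration[OF tW] by blast
qed

end

theorem mainTheorem4:
  fixes x0 L tV :: real and \<gamma> :: "real \<Rightarrow> real \<times> real" and V :: "real \<times> real \<Rightarrow> real \<times> real"
  assumes "x0 > 0" and "L > 0"
    and "admissible L x0 \<gamma>" and "arclength_param L \<gamma>"
    and "admissible_variation L x0 \<gamma> V tV"
    and "first_order_area_preserving L \<gamma> V tV"
  shows "\<exists>W tW. admissible_variation L x0 \<gamma> W tW \<and> area_preserving L \<gamma> W tW \<and>
           (\<forall>s\<in>{0..2*L}. velocity W tW s = velocity V tV s) \<and>
           (\<forall>s\<in>{0..L/2} \<union> {3*L/2..2*L}. acceleration W tW s = acceleration V tV s)"
proof -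
  have "tV > 0" and "smooth_on_set ({0..2*L} \<times> {-tV..tV}) V"
    using assms(5) by (simp_all add: admissible_variation_def)
  then obtain d G where "d > 0" and G: "Cinf_on ({0 - d<..<2*L + d} \<times> {-tV - d<..<tV + d}) G"
    and G_eq_V: "\<And>s t. s \<in> {0..2*L} \<Longrightarrow> t \<in> {-tV..tV} \<Longrightarrow> G (s, t) = V (s, t)"
    using smooth_on_set_box_neighbourhood[of 0 "2*L" "-tV" tV V] assms(2) by auto
  have "{-d<..<2*L + d} \<times> {-tV<..<tV} \<subseteq> {0 - d<..<2*L + d} \<times> {-tV - d<..<tV + d}"
    using \<open>d > 0\<close> by auto
  then have "Cinf_on ({-d<..<2*L + d} \<times> {-tV<..<tV}) G"
    using G Ck_on_subset[OF Cinf_on_imp_Ck_on[OF G]] by (simp add: Cinf_on_def open_Times)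
  then interpret first_order_variation L x0 tV d \<gamma> V G
    using assms(2-6) \<open>d > 0\<close> G_eq_V by unfold_locales
  show ?thesis
    by (rule exists_area_preserving_variation)
qed

end
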